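(* Let $d\ge1$ and let $\eta$ be the stationary Brown-Resnick space-time process (defined in the context) with dependence function $\delta(\boldsymbol h,u)=\sum_{j=1}^dC_j|h_j|^{\alpha_j}+C_{d+1}|u|^{\alpha_{d+1}}$, parameter $\boldsymbol\theta=(C_1,\dots,C_{d+1},\alpha_1,\dots,\alpha_{d+1})$, true parameter $\boldsymbol\theta^\star$ lying in a compact set $\Theta^\star\subset\{C_j\in(0,\infty),\alpha_j\in(0,2],j=1,\dots,d+1\}$, and assume the identifiability condition stated in the context. Then for $\boldsymbol s^{(1)},\boldsymbol s^{(2)}\in\mathbb R^d$ and $t^{(1)},t^{(2)}\in[0,\infty)$, componentwise: (1) $\mathbb E[|\nabla_{\boldsymbol\theta}\log g_{\boldsymbol\theta}(\eta(\boldsymbol s^{(1)},t^{(1)}),\eta(\boldsymbol s^{(2)},t^{(2)}))|^3]<\infty$ for every $\boldsymbol\theta\in\Theta^\star$; (2) $\mathbb E[\sup_{\boldsymbol\theta\in\Theta^\star}|\nabla^2_{\boldsymbol\theta}\log g_{\boldsymbol\theta}(\eta(\boldsymbol s^{(1)},t^{(1)}),\eta(\boldsymbol s^{(2)},t^{(2)}))|]<\infty$.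
   Context: Brown-Resnick space-time process: $\eta(\boldsymbol s,t)=\bigvee_{j\ge1}\xi_je^{W_j(\boldsymbol s,t)-\delta(\boldsymbol s,t)}$, $\{\xi_j\}$ points of a Poisson process on $[0,\infty)$ with intensity $\xi^{-2}d\xi$, $W_j$ independent copies of a centred Gaussian process $W$ with stationary increments, $W(\boldsymbol 0,0)=0$, covariance $\delta(\boldsymbol s^{(1)},t^{(1)})+\delta(\boldsymbol s^{(2)},t^{(2)})-\delta(\boldsymbol s^{(1)}-\boldsymbol s^{(2)},t^{(1)}-t^{(2)})$; data generated under $\boldsymbol\theta^\star$; expectations are under $\boldsymbol\theta^\star$. For lag $(\boldsymbol h,u)\ne\boldsymbol 0$ the bivariate distribution of $(\eta(\boldsymbol s,t),\eta(\boldsymbol s+\boldsymbol h,t+u))$ is $G=\exp\{-V\}$, $V(y_1,y_2)=\frac1{y_1}\Phi\big(\frac{\log(y_2/y_1)}{\sqrt{2\delta(\boldsymbol h,u)}}+\sqrt{\delta(\boldsymbol h,u)/2}\big)+\frac1{y_2}\Phi\big(\frac{\log(y_1/y_2)}{\sqrt{2\delta(\boldsymbol h,u)}}+\sqrt{\delta(\boldsymbol h,u)/2}\big)$, $\Phi$ the standard normal cdf; $g_{\boldsymbol\theta}$ is the density of this distribution under $\boldsymbol\theta$, with the lag $(\boldsymbol h,u)$ given by the difference of the two space-time points at which $\eta$ is evaluated. Identifiability condition (for fixed maximal lags $\boldsymbol r\in\mathbb N_0^d$, $p\in\mathbb N_0$, $(\boldsymbol r,p)\neq\boldsymbol 0$,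 design mask $\mathcal H_{\boldsymbol r}=\{\boldsymbol h\in\mathbb N_0^d:\boldsymbol h\le\boldsymbol r\}$, and grid points $(\boldsymbol s,t)\in\{1,\dots,M\}^d\times\{1,\dots,T\}$): $\boldsymbol\theta=\tilde{\boldsymbol\theta}$ iff $g_{\boldsymbol\theta}(\eta(\boldsymbol s,t),\eta(\boldsymbol s+\boldsymbol h,t+u))=g_{\tilde{\boldsymbol\theta}}(\eta(\boldsymbol s,t),\eta(\boldsymbol s+\boldsymbol h,t+u))$ for all $\boldsymbol h\in\mathcal H_{\boldsymbol r}$, $0\le u\le p$. *)

theory Defs
  imports "HOL-Probability.Probability"
begin

text \<open>Parameter index: (False, Some j) = C_j, (False, None) = C_{d+1} (time),
  (True, Some j) = alpha_j, (True, None) = alpha_{d+1}.\<close>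
type_synonym 'd par = "real ^ (bool \<times> 'd option)"

definition Phi :: "real \<Rightarrow> real" where
  "Phi x = (LBINT t:{..x}. std_normal_density t)"

definition delta :: "'d::finite par \<Rightarrow> real ^ 'd \<Rightarrow> real \<Rightarrow> real" where
  "delta \<theta> h u =
     (\<Sum>j\<in>UNIV. \<theta> $ (False, Some j) * \<bar>h $ j\<bar> powr (\<theta> $ (True, Some j)))
     + \<theta> $ (False, None) * \<bar>u\<bar> powr (\<theta> $ (True, None))"

definition Vexp :: "'d::finite par \<Rightarrow> real ^ 'd \<Rightarrow> real \<Rightarrow> real \<Rightarrow> real \<Rightarrow> real" where
  "Vexp \<theta> h u y1 y2 =
     (let D = delta \<theta> h u in
       1 / y1 * Phi (ln (y2 / y1) / sqrt (2 * D) + sqrt (D / 2))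
     + 1 / y2 * Phi (ln (y1 / y2) / sqrt (2 * D) + sqrt (D / 2)))"

definition Gcdf :: "'d::finite par \<Rightarrow> real ^ 'd \<Rightarrow> real \<Rightarrow> real \<Rightarrow> real \<Rightarrow> real" where
  "Gcdf \<theta> h u y1 y2 = exp (- Vexp \<theta> h u y1 y2)"

definition gdens :: "'d::finite par \<Rightarrow> real ^ 'd \<Rightarrow> real \<Rightarrow> real \<Rightarrow> real \<Rightarrow> real" where
  "gdens \<theta> h u y1 y2 = deriv (\<lambda>a. deriv (\<lambda>b. Gcdf \<theta> h u a b) y2) y1"

definition pderiv_par :: "(bool \<times> 'd::finite option) \<Rightarrow> ('d par \<Rightarrow> real) \<Rightarrow> 'd par \<Rightarrow> real" where
  "pderiv_par i f \<theta> = deriv (\<lambda>x. f (\<chi> k. if k = i then x else \<theta> $ k)) (\<theta> $ i)"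

definition admissible :: "'d::finite par set" where
  "admissible = {\<theta>. \<forall>j. 0 < \<theta> $ (False, j) \<and> 0 < \<theta> $ (True, j) \<and> \<theta> $ (True, j) \<le> 2}"

text \<open>Identifiability condition for maximal lags r, p (design mask h <= r, 0 <= u <= p),
  nonzero lags only (g is undefined at lag 0).\<close>
definition identifiable :: "'d::finite par set \<Rightarrow> nat ^ 'd \<Rightarrow> nat \<Rightarrow> bool" where
  "identifiable \<Theta> r p \<longleftrightarrow>
     (\<forall>\<theta>\<in>\<Theta>. \<forall>\<theta>'\<in>\<Theta>. \<theta> = \<theta>' \<longleftrightarrow>
        (\<forall>h u. (\<forall>j. h $ j \<le> r $ j) \<longrightarrow> u \<le> p \<longrightarrow> (h, u) \<noteq> (0, 0) \<longrightarrow>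
           (\<forall>y1 y2. 0 < y1 \<longrightarrow> 0 < y2 \<longrightarrow>
              gdens \<theta> (\<chi> j. real (h $ j)) (real u) y1 y2
              = gdens \<theta>' (\<chi> j. real (h $ j)) (real u) y1 y2)))"

end

theory Submission
  imports Defs
begin

text \<open>For a lag \<open>(h, u) \<noteq> 0\<close> the log-density \<open>ln g\<^sub>\<theta>(a, b)\<close> depends on \<open>\<theta>\<close> only through
  \<open>D = \<delta>(h, u)\<close>, and its first two derivatives in \<open>D\<close> are bounded by a polynomial in
  \<open>\<bar>ln (b/a)\<bar>\<close>, \<open>1/a\<close>, \<open>1/b\<close>, uniformly for \<open>D\<close> in a compact subinterval of \<open>(0, \<infinity>)\<close>.
  Over a compact admissible parameter set, \<open>\<delta>(h, u)\<close> stays in such an interval and its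
  parameter derivatives are bounded, so by the chain rule the cube of the score and the Hessian
  are dominated by \<open>K (e\<^bsup>c/a\<^esup> + \<surd>a + e\<^bsup>c/b\<^esup> + \<surd>b)\<close>. The bivariate law gives
  \<open>P(\<eta> \<le> y) \<le> e\<^bsup>-\<Phi>(0)/y\<^esup>\<close> and \<open>P(\<eta> > y) \<le> 2/y\<close> for each margin, and these make
  \<open>E e\<^bsup>c/\<eta>\<^esup>\<close> (for \<open>c = \<Phi>(0)/2\<close>) and \<open>E \<surd>\<eta>\<close> finite.\<close>

section \<open>The standard normal distribution function\<close>

abbreviation "phi \<equiv> std_normal_density"

lemma phi_set_integrable: "set_integrable lborel A phi" if "A \<in> sets lborel"
  unfolding set_integrable_def
  using integrable_mult_indicator[OF that integrable_normal_density[of 1 0]] by simp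

lemma Phi_eq_interval_integral: "Phi x = (LBINT t=-\<infinity>..ereal x. phi t)"
  unfolding Phi_def
  by (subst interval_integral_Ioc') (auto intro!: arg_cong[where f="\<lambda>A. set_lebesgue_integral lborel A phi"])

lemma phi_interval_integrable: "interval_lebesgue_integrable lborel a b phi"
  unfolding interval_lebesgue_integrable_def by (auto intro!: phi_set_integrable)

lemma Phi_eq_Phi0_plus_integral: "Phi x = Phi 0 + (LBINT t=ereal 0..ereal x. phi t)"
  unfolding Phi_eq_interval_integral
  by (subst interval_integral_sum[symmetric, where b="ereal 0"]) (auto intro!: phi_interval_integrable)

lemma continuous_on_phi: "continuous_on A phi"
  unfolding std_normal_density_def by (intro continuous_intros) auto

lemma DERIV_Phi: "(Phi has_real_derivative phi x) (at x)"
proof -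
  define a where "a = min x 0 - 1"
  define b where "b = max x 0 + 1"
  have "((\<lambda>u. LBINT y=ereal 0..ereal u. phi y) has_vector_derivative (phi x)) (at x within {a..b})"
    by (rule interval_integral_FTC2) (auto simp: a_def b_def intro: continuous_on_phi)
  then have "((\<lambda>u. LBINT y=ereal 0..ereal u. phi y) has_vector_derivative (phi x)) (at x)"
    by (subst (asm) at_within_Icc_at) (auto simp: a_def b_def)
  then have "((\<lambda>u. Phi 0 + (LBINT y=ereal 0..ereal u. phi y)) has_real_derivative (phi x)) (at x)"
    by (auto simp: has_real_derivative_iff_has_vector_derivative intro!: derivative_eq_intros)
  then show ?thesis by (subst Phi_eq_Phi0_plus_integral[abs_def]) simp
qed

lemma Phi_nonneg: "0 \<le> Phi x"
  unfolding Phi_def set_lebesgue_integral_def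
  by (intro integral_nonneg_AE) (auto split: split_indicator)

lemma Phi_le_1: "Phi x \<le> 1"
proof -
  have "Phi x \<le> (\<integral>t. phi t \<partial>lborel)"
    unfolding Phi_def set_lebesgue_integral_def
    by (intro integral_mono integrable_mult_indicator) (auto split: split_indicator)
  then show ?thesis by simp
qed

lemma Phi_mono: "x \<le> y \<Longrightarrow> Phi x \<le> Phi y"
  unfolding Phi_def set_lebesgue_integral_def
  by (intro integral_mono integrable_mult_indicator) (auto split: split_indicator)

lemma Phi_strict_mono: "x < y \<Longrightarrow> Phi x < Phi y"
  by (rule DERIV_pos_imp_increasing) (auto intro!: exI DERIV_Phi normal_density_pos)

lemma Phi_pos: "0 < Phi x"
  using Phi_strict_mono[of "x-1" x] Phi_nonneg[of "x-1"] by simp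

section \<open>The log-density as a function of \<open>A = \<surd>(2 \<delta>)\<close>\<close>

text \<open>With \<open>z = ln (y\<^sub>2 / y\<^sub>1)\<close> and \<open>A = \<surd>(2 \<delta>)\<close>, the arguments of \<open>\<Phi>\<close> in \<open>V\<close> are
  \<open>phi_arg z A\<close> and \<open>phi_arg (-z) A\<close>, \<open>V = expmeas (1/y\<^sub>1) (1/y\<^sub>2) z A\<close> and
  \<open>g = e\<^sup>-\<^sup>V dens_factor y\<^sub>2 z A / (y\<^sub>1\<^sup>2 y\<^sub>2\<^sup>2)\<close>. The suffixes \<open>_d1\<close>, \<open>_d2\<close> mark the first
  and second derivatives in \<open>A\<close>.\<close>

definition phi_arg :: "real \<Rightarrow> real \<Rightarrow> real" where "phi_arg c A = c / A + A / 2"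
definition phi_arg_d1 :: "real \<Rightarrow> real \<Rightarrow> real" where "phi_arg_d1 c A = - c / A^2 + 1 / 2"
definition phi_arg_d2 :: "real \<Rightarrow> real \<Rightarrow> real" where "phi_arg_d2 c A = 2 * c / A^3"

lemma DERIV_phi_arg: "A \<noteq> 0 \<Longrightarrow> (phi_arg c has_real_derivative phi_arg_d1 c A) (at A)"
  unfolding phi_arg_def[abs_def] phi_arg_d1_def
  by (auto intro!: derivative_eq_intros simp: field_simps power2_eq_square)

lemma DERIV_phi_arg_d1: "A \<noteq> 0 \<Longrightarrow> (phi_arg_d1 c has_real_derivative phi_arg_d2 c A) (at A)"
  unfolding phi_arg_d1_def[abs_def] phi_arg_d2_def
  by (auto intro!: derivative_eq_intros simp: field_simps power2_eq_square power3_eq_cube)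

lemma DERIV_phi: "(phi has_real_derivative (- x * phi x)) (at x)"
  unfolding std_normal_density_def[abs_def]
  by (auto intro!: derivative_eq_intros simp: field_simps power2_eq_square)

lemma DERIV_Phi_phi_arg: "A \<noteq> 0 \<Longrightarrow> ((\<lambda>A. Phi (phi_arg c A)) has_real_derivative phi (phi_arg c A) * phi_arg_d1 c A) (at A)"
  by (rule DERIV_chain2[OF DERIV_Phi DERIV_phi_arg])

lemma DERIV_phi_phi_arg: "A \<noteq> 0 \<Longrightarrow> ((\<lambda>A. phi (phi_arg c A)) has_real_derivative (- phi_arg c A * phi (phi_arg c A)) * phi_arg_d1 c A) (at A)"
  by (rule DERIV_chain2[OF DERIV_phi DERIV_phi_arg])

text \<open>\<open>\<phi>(phi_arg z A) / A\<close> has derivative \<open>- \<phi>(phi_arg z A) * rho z A\<close>.\<close>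

definition rho :: "real \<Rightarrow> real \<Rightarrow> real" where
  "rho z A = phi_arg z A * phi_arg_d1 z A / A + 1 / A^2"
definition rho_d1 :: "real \<Rightarrow> real \<Rightarrow> real" where
  "rho_d1 z A = (phi_arg_d1 z A ^ 2 + phi_arg z A * phi_arg_d2 z A) / A - phi_arg z A * phi_arg_d1 z A / A^2 - 2 / A^3"

lemma DERIV_rho: "A \<noteq> 0 \<Longrightarrow> (rho z has_real_derivative rho_d1 z A) (at A)"
  unfolding rho_def[abs_def] rho_d1_def
  by (auto intro!: derivative_eq_intros DERIV_phi_arg DERIV_phi_arg_d1 simp: field_simps power2_eq_square power3_eq_cube)

definition dens_factor :: "real \<Rightarrow> real \<Rightarrow> real \<Rightarrow> real" where
  "dens_factor y2 z A = Phi (phi_arg z A) * Phi (phi_arg (-z) A) + y2 * phi (phi_arg z A) / A"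
definition dens_factor_d1 :: "real \<Rightarrow> real \<Rightarrow> real \<Rightarrow> real" where
  "dens_factor_d1 y2 z A = phi (phi_arg z A) * phi_arg_d1 z A * Phi (phi_arg (-z) A) + Phi (phi_arg z A) * phi (phi_arg (-z) A) * phi_arg_d1 (-z) A
     - y2 * phi (phi_arg z A) * rho z A"
definition dens_factor_d2 :: "real \<Rightarrow> real \<Rightarrow> real \<Rightarrow> real" where
  "dens_factor_d2 y2 z A = (phi (phi_arg z A) * phi_arg_d2 z A - phi_arg z A * phi (phi_arg z A) * phi_arg_d1 z A ^ 2) * Phi (phi_arg (-z) A)
     + 2 * phi (phi_arg z A) * phi_arg_d1 z A * phi (phi_arg (-z) A) * phi_arg_d1 (-z) A
     + Phi (phi_arg z A) * (phi (phi_arg (-z) A) * phi_arg_d2 (-z) A - phi_arg (-z) A * phi (phi_arg (-z) A) * phi_arg_d1 (-z) A ^ 2)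
     + y2 * phi (phi_arg z A) * (phi_arg z A * phi_arg_d1 z A * rho z A - rho_d1 z A)"

lemma DERIV_dens_factor: "A \<noteq> 0 \<Longrightarrow> (dens_factor y2 z has_real_derivative dens_factor_d1 y2 z A) (at A)"
  unfolding dens_factor_def[abs_def] dens_factor_d1_def
  by (rule DERIV_cong, (rule derivative_intros DERIV_Phi_phi_arg DERIV_phi_phi_arg | assumption)+) (simp add: rho_def field_simps power2_eq_square)

lemma DERIV_dens_factor_d1: "A \<noteq> 0 \<Longrightarrow> (dens_factor_d1 y2 z has_real_derivative dens_factor_d2 y2 z A) (at A)"
  unfolding dens_factor_d1_def[abs_def] dens_factor_d2_def
  by (rule DERIV_cong, (rule derivative_intros DERIV_Phi_phi_arg DERIV_phi_phi_arg DERIV_phi_arg_d1 DERIV_rho | assumption)+) (simp add: field_simps power2_eq_square)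

definition expmeas :: "real \<Rightarrow> real \<Rightarrow> real \<Rightarrow> real \<Rightarrow> real" where
  "expmeas B1 B2 z A = B1 * Phi (phi_arg z A) + B2 * Phi (phi_arg (-z) A)"
definition expmeas_d1 :: "real \<Rightarrow> real \<Rightarrow> real \<Rightarrow> real \<Rightarrow> real" where
  "expmeas_d1 B1 B2 z A = B1 * (phi (phi_arg z A) * phi_arg_d1 z A) + B2 * (phi (phi_arg (-z) A) * phi_arg_d1 (-z) A)"
definition expmeas_d2 :: "real \<Rightarrow> real \<Rightarrow> real \<Rightarrow> real \<Rightarrow> real" where
  "expmeas_d2 B1 B2 z A = B1 * (phi (phi_arg z A) * phi_arg_d2 z A - phi_arg z A * phi (phi_arg z A) * phi_arg_d1 z A ^ 2)
     + B2 * (phi (phi_arg (-z) A) * phi_arg_d2 (-z) A - phi_arg (-z) A * phi (phi_arg (-z) A) * phi_arg_d1 (-z) A ^ 2)"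

lemma DERIV_expmeas: "A \<noteq> 0 \<Longrightarrow> (expmeas B1 B2 z has_real_derivative expmeas_d1 B1 B2 z A) (at A)"
  unfolding expmeas_def[abs_def] expmeas_d1_def
  by (rule DERIV_cong, (rule derivative_intros DERIV_Phi_phi_arg DERIV_phi_phi_arg | assumption)+) (simp add: field_simps)

lemma DERIV_expmeas_d1: "A \<noteq> 0 \<Longrightarrow> (expmeas_d1 B1 B2 z has_real_derivative expmeas_d2 B1 B2 z A) (at A)"
  unfolding expmeas_d1_def[abs_def] expmeas_d2_def
  by (rule DERIV_cong, (rule derivative_intros DERIV_Phi_phi_arg DERIV_phi_phi_arg DERIV_phi_arg_d1 | assumption)+) (simp add: field_simps power2_eq_square)

lemma dens_factor_pos: "0 < A \<Longrightarrow> 0 \<le> y2 \<Longrightarrow> 0 < dens_factor y2 z A"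
  unfolding dens_factor_def by (intro add_pos_nonneg mult_pos_pos Phi_pos divide_nonneg_pos mult_nonneg_nonneg) auto

definition logdens_A :: "real \<Rightarrow> real \<Rightarrow> real \<Rightarrow> real \<Rightarrow> real \<Rightarrow> real" where
  "logdens_A B1 B2 y2 z A = - expmeas B1 B2 z A + ln (dens_factor y2 z A)"
definition logdens_A_d1 :: "real \<Rightarrow> real \<Rightarrow> real \<Rightarrow> real \<Rightarrow> real \<Rightarrow> real" where
  "logdens_A_d1 B1 B2 y2 z A = - expmeas_d1 B1 B2 z A + dens_factor_d1 y2 z A / dens_factor y2 z A"
definition logdens_A_d2 :: "real \<Rightarrow> real \<Rightarrow> real \<Rightarrow> real \<Rightarrow> real \<Rightarrow> real" where
  "logdens_A_d2 B1 B2 y2 z A = - expmeas_d2 B1 B2 z A + dens_factor_d2 y2 z A / dens_factor y2 z A - (dens_factor_d1 y2 z A / dens_factor y2 z A)^2"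

lemma DERIV_logdens_A: "0 < A \<Longrightarrow> 0 \<le> y2 \<Longrightarrow> (logdens_A B1 B2 y2 z has_real_derivative logdens_A_d1 B1 B2 y2 z A) (at A)"
  unfolding logdens_A_def[abs_def] logdens_A_d1_def
  using dens_factor_pos[of A y2 z]
  by (auto intro!: derivative_eq_intros DERIV_expmeas DERIV_dens_factor simp: field_simps)

lemma DERIV_logdens_A_d1: "0 < A \<Longrightarrow> 0 \<le> y2 \<Longrightarrow> (logdens_A_d1 B1 B2 y2 z has_real_derivative logdens_A_d2 B1 B2 y2 z A) (at A)"
  unfolding logdens_A_d1_def[abs_def] logdens_A_d2_def
  using dens_factor_pos[of A y2 z]
  by (auto intro!: derivative_eq_intros DERIV_expmeas_d1 DERIV_dens_factor DERIV_dens_factor_d1 simp: field_simps power2_eq_square)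

definition logdens_D :: "real \<Rightarrow> real \<Rightarrow> real \<Rightarrow> real \<Rightarrow> real \<Rightarrow> real" where
  "logdens_D B1 B2 y2 z D = logdens_A B1 B2 y2 z (sqrt (2 * D))"
definition logdens_D_d1 :: "real \<Rightarrow> real \<Rightarrow> real \<Rightarrow> real \<Rightarrow> real \<Rightarrow> real" where
  "logdens_D_d1 B1 B2 y2 z D = logdens_A_d1 B1 B2 y2 z (sqrt (2 * D)) / sqrt (2 * D)"
definition logdens_D_d2 :: "real \<Rightarrow> real \<Rightarrow> real \<Rightarrow> real \<Rightarrow> real \<Rightarrow> real" where
  "logdens_D_d2 B1 B2 y2 z D = (logdens_A_d2 B1 B2 y2 z (sqrt (2 * D)) - logdens_A_d1 B1 B2 y2 z (sqrt (2 * D)) / sqrt (2 * D))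
      / (2 * D)"

lemma DERIV_sqrt_2x: "0 < D \<Longrightarrow> ((\<lambda>D. sqrt (2 * D)) has_real_derivative 1 / sqrt (2 * D)) (at D)"
  by (auto intro!: derivative_eq_intros simp: field_simps real_sqrt_mult)

lemma DERIV_logdens_D: assumes a: "0 < D" "0 \<le> y2"
  shows "(logdens_D B1 B2 y2 z has_real_derivative logdens_D_d1 B1 B2 y2 z D) (at D)"
proof -
  have "((\<lambda>D. logdens_A B1 B2 y2 z (sqrt(2*D))) has_real_derivative
      logdens_A_d1 B1 B2 y2 z (sqrt(2*D)) * (1/sqrt(2*D))) (at D)"
    by (rule DERIV_chain2[OF DERIV_logdens_A DERIV_sqrt_2x]) (use a in auto)
  then show ?thesis by (simp add: logdens_D_def[abs_def] logdens_D_d1_def)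
qed

lemma DERIV_logdens_D_d1: "0 < D \<Longrightarrow> 0 \<le> y2 \<Longrightarrow> (logdens_D_d1 B1 B2 y2 z has_real_derivative logdens_D_d2 B1 B2 y2 z D) (at D)"
  unfolding logdens_D_d1_def[abs_def] logdens_D_d2_def
  by (rule DERIV_cong[OF DERIV_divide[OF DERIV_chain2[OF DERIV_logdens_A_d1 DERIV_sqrt_2x]]])
    (auto intro!: DERIV_sqrt_2x)

section \<open>Closed form of the bivariate density\<close>

definition Varg :: "real \<Rightarrow> real \<Rightarrow> real \<Rightarrow> real" where
  "Varg D a b = ln (b / a) / sqrt (2 * D) + sqrt (D / 2)"
definition Vdelta :: "real \<Rightarrow> real \<Rightarrow> real \<Rightarrow> real" where
  "Vdelta D a b = 1 / a * Phi (Varg D a b) + 1 / b * Phi (Varg D b a)"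

lemma sqrt_half: "0 \<le> D \<Longrightarrow> sqrt (D / 2) = sqrt (2 * D) / 2"
  by (rule real_sqrt_unique) (auto simp: power_divide)

lemma Varg_eq_phi_arg: "0 \<le> D \<Longrightarrow> Varg D a b = phi_arg (ln (b / a)) (sqrt (2 * D))"
  by (simp add: Varg_def phi_arg_def sqrt_half)

lemma ln_div_swap: "0 < (a::real) \<Longrightarrow> 0 < b \<Longrightarrow> ln (a / b) = - ln (b / a)"
  by (simp add: ln_div[of a b] ln_div[of b a])

lemma Vexp_eq_Vdelta: "Vexp \<theta> h u a b = Vdelta (delta \<theta> h u) a b"
  by (simp add: Vexp_def Vdelta_def Varg_def Let_def)

lemma sq_expand: "(A::real) \<noteq> 0 \<Longrightarrow> (z / A + A / 2)\<^sup>2 = z^2 / A^2 + z + A^2/4"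
  by (simp add: power2_eq_square field_simps)

text \<open>The identity behind \<open>\<partial>V/\<partial>y\<^sub>2 = - \<Phi>(Varg D y\<^sub>2 y\<^sub>1) / y\<^sub>2\<^sup>2\<close>: the two \<open>\<phi>\<close>-terms cancel.\<close>

lemma phi_Varg_swap:
  assumes "0 < D" "0 < a" "0 < b"
  shows "phi (Varg D a b) * b = phi (Varg D b a) * a"
proof -
  define A where "A = sqrt (2 * D)"
  define z where "z = ln (b / a)"
  have A: "A > 0" using assms by (simp add: A_def)
  have le: "0 \<le> D" using assms by simp
  have Varg_ab: "Varg D a b = z / A + A / 2" by (simp only: Varg_eq_phi_arg[OF le] phi_arg_def A_def z_def)
  have Varg_ba: "Varg D b a = (- z) / A + A / 2"
    by (simp only: Varg_eq_phi_arg[OF le] phi_arg_def A_def z_def ln_div_swap[OF assms(2,3)])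
  have bz: "b = a * exp z" unfolding z_def using assms by (subst exp_ln) auto
  have s1: "(z / A + A / 2)\<^sup>2 = z^2 / A^2 + z + A^2/4" using A by (intro sq_expand) auto
  have s2: "((- z) / A + A / 2)\<^sup>2 = z^2 / A^2 + (- z) + A^2/4" 
    using sq_expand[of A "- z"] A by simp
  have e: "- (z / A + A / 2)\<^sup>2 / 2 + z = - ((- z) / A + A / 2)\<^sup>2 / 2"
    unfolding s1 s2 by (simp add: field_simps)
  have "phi (Varg D a b) * b = (exp (- (z / A + A / 2)\<^sup>2 / 2) * exp z) * a / sqrt (2 * pi)"
    unfolding Varg_ab by (subst bz, simp add: std_normal_density_def)
  also have "\<dots> = exp (- ((- z) / A + A / 2)\<^sup>2 / 2) * a / sqrt (2 * pi)"
    by (simp only: exp_add[symmetric] e)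
  also have "\<dots> = phi (Varg D b a) * a"
    by (subst Varg_ba) (simp add: std_normal_density_def)
  finally show ?thesis .
qed

lemma DERIV_Varg_right:
  assumes "0 < D" "0 < a" "0 < b"
  shows "((\<lambda>b. Varg D a b) has_real_derivative 1 / (b * sqrt (2 * D))) (at b)"
  unfolding Varg_def using assms
  by (auto intro!: derivative_eq_intros simp: field_simps)

lemma DERIV_Varg_left:
  assumes "0 < D" "0 < a" "0 < b"
  shows "((\<lambda>b. Varg D b a) has_real_derivative - 1 / (b * sqrt (2 * D))) (at b)"
  unfolding Varg_def using assms
  by (auto intro!: derivative_eq_intros simp: field_simps)

lemma Vdelta_commute: "Vdelta D a b = Vdelta D b a"
  unfolding Vdelta_def by simp

lemma DERIV_Vdelta_right:
  assumes "0 < D" "0 < a" "0 < b"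
  shows "((\<lambda>b. Vdelta D a b) has_real_derivative - Phi (Varg D b a) / b^2) (at b)"
proof -
  have d1: "((\<lambda>b. Phi (Varg D a b)) has_real_derivative phi (Varg D a b) * (1/(b * sqrt(2*D)))) (at b)"
    by (rule DERIV_chain2[OF DERIV_Phi DERIV_Varg_right[OF assms]])
  have d2: "((\<lambda>b. Phi (Varg D b a)) has_real_derivative phi (Varg D b a) * (- 1/(b * sqrt(2*D)))) (at b)"
    by (rule DERIV_chain2[OF DERIV_Phi DERIV_Varg_left[OF assms]])
  have d3: "((\<lambda>b. 1/b) has_real_derivative -1/b^2) (at b)"
    using assms by (auto intro!: derivative_eq_intros simp: power2_eq_square)
  have f: "((\<lambda>b. 1 / a * Phi (Varg D a b) + 1 / b * Phi (Varg D b a)) has_real_derivative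
     1 / a * (phi (Varg D a b) * (1 / (b * sqrt (2 * D)))) + ((- 1 / b^2) * Phi (Varg D b a) 
      + 1 / b * (phi (Varg D b a) * (- 1 / (b * sqrt (2 * D)))))) (at b)"
    by (rule DERIV_add[OF DERIV_cmult[OF d1] DERIV_cong[OF DERIV_mult[OF d3 d2]]]) (simp add: algebra_simps)
  have eq: "1 / a * (phi (Varg D a b) * (1 / (b * sqrt (2 * D)))) + ((- 1 / b^2) * Phi (Varg D b a) 
      + 1 / b * (phi (Varg D b a) * (- 1 / (b * sqrt (2 * D))))) = - Phi (Varg D b a) / b^2"
  proof -
    have e: "phi (Varg D a b) / a = phi (Varg D b a) / b"
      using phi_Varg_swap[OF assms] assms by (simp add: field_simps)
    have "1 / a * (phi (Varg D a b) * (1 / (b * sqrt (2 * D)))) = phi (Varg D a b) / a * (1 / (b * sqrt (2 * D)))"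
      by simp
    also have "\<dots> = phi (Varg D b a) / b * (1 / (b * sqrt (2 * D)))" by (simp only: e)
    finally have x: "1 / a * (phi (Varg D a b) * (1 / (b * sqrt (2 * D)))) = phi (Varg D b a) / b * (1 / (b * sqrt (2 * D)))" .
    have z: "1 / b * (phi (Varg D b a) * (- 1 / (b * sqrt (2 * D)))) = - (phi (Varg D b a) / b * (1 / (b * sqrt (2 * D))))"
      by simp
    have y: "(- 1 / b^2) * Phi (Varg D b a) = - Phi (Varg D b a) / b^2" by simp
    show ?thesis using x y z by linarith
  qed
  have eqf: "Vdelta D a = (\<lambda>b. 1 / a * Phi (Varg D a b) + 1 / b * Phi (Varg D b a))"
    by (simp add: Vdelta_def fun_eq_iff)
  show ?thesis unfolding eqf by (rule DERIV_cong[OF f eq])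
qed

lemma DERIV_Vdelta_left:
  assumes "0 < D" "0 < a" "0 < b"
  shows "((\<lambda>a. Vdelta D a b) has_real_derivative - Phi (Varg D a b) / a^2) (at a)"
proof -
  have e: "(\<lambda>a. Vdelta D a b) = Vdelta D b" by (rule ext, rule Vdelta_commute)
  show ?thesis unfolding e by (rule DERIV_Vdelta_right[of D b a]) (use assms in auto)
qed

lemma Gcdf_eq_exp_Vdelta: "Gcdf \<theta> h u a b = exp (- Vdelta (delta \<theta> h u) a b)"
  by (simp add: Gcdf_def Vexp_eq_Vdelta)

lemma DERIV_exp_Vdelta_right:
  assumes "0 < D" "0 < a" "0 < b"
  shows "((\<lambda>b. exp (- Vdelta D a b)) has_real_derivative exp (- Vdelta D a b) * (Phi (Varg D b a) / b^2)) (at b)"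
  using DERIV_chain2[OF DERIV_exp DERIV_minus[OF DERIV_Vdelta_right[OF assms]]] by simp

lemma DERIV_exp_Vdelta_left:
  assumes "0 < D" "0 < a" "0 < b"
  shows "((\<lambda>a. exp (- Vdelta D a b)) has_real_derivative exp (- Vdelta D a b) * (Phi (Varg D a b) / a^2)) (at a)"
  using DERIV_chain2[OF DERIV_exp DERIV_minus[OF DERIV_Vdelta_left[OF assms]]] by simp

lemma gdens_eq:
  assumes D: "0 < delta \<theta> h u" and ab: "0 < a" "0 < b"
  shows "gdens \<theta> h u a b = exp (- Vdelta (delta \<theta> h u) a b) *
     (Phi (Varg (delta \<theta> h u) a b) / a^2 * (Phi (Varg (delta \<theta> h u) b a) / b^2)
      + phi (Varg (delta \<theta> h u) b a) / (a * sqrt (2 * delta \<theta> h u) * b^2))"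
proof -
  define D where "D = delta \<theta> h u"
  have D0: "0 < D" using D by (simp add: D_def)
  define H where "H a = exp (- Vdelta D a b) * (Phi (Varg D b a) / b^2)" for a
  have inner: "deriv (\<lambda>b. Gcdf \<theta> h u a' b) b = H a'" if "0 < a'" for a'
    unfolding Gcdf_eq_exp_Vdelta H_def D_def[symmetric]
    by (rule DERIV_imp_deriv, rule DERIV_exp_Vdelta_right) (use D0 ab that in auto)
  have ev: "eventually (\<lambda>a'. deriv (\<lambda>b. Gcdf \<theta> h u a' b) b = H a') (nhds a)"
    using eventually_nhds_in_open[of "{0<..}" a] ab
    by (auto elim!: eventually_mono intro: inner)
  have gd: "gdens \<theta> h u a b = deriv H a"
    unfolding gdens_def by (rule deriv_cong_ev[OF ev refl])
  have dW: "((\<lambda>a. Phi (Varg D b a)) has_real_derivative phi (Varg D b a) * (1 / (a * sqrt (2 * D)))) (at a)"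
    by (rule DERIV_chain2[OF DERIV_Phi DERIV_Varg_right]) (use D0 ab in auto)
  have "(H has_real_derivative
      exp (- Vdelta D a b) * (Phi (Varg D a b) / a^2) * (Phi (Varg D b a) / b^2)
      + exp (- Vdelta D a b) * (phi (Varg D b a) * (1 / (a * sqrt (2 * D))) / b^2)) (at a)"
    unfolding H_def[abs_def]
    by (rule DERIV_cong[OF DERIV_mult[OF DERIV_exp_Vdelta_left[OF D0 ab] DERIV_divide[OF dW DERIV_const]]])
      (use ab in \<open>auto simp: field_simps power2_eq_square\<close>)
  then have "deriv H a = exp (- Vdelta D a b) * (Phi (Varg D a b) / a^2) * (Phi (Varg D b a) / b^2)
      + exp (- Vdelta D a b) * (phi (Varg D b a) * (1 / (a * sqrt (2 * D))) / b^2)"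
    by (rule DERIV_imp_deriv)
  then show ?thesis unfolding gd D_def[symmetric] by (simp add: algebra_simps)
qed

lemma density_sum_eq:
  fixes a b A p1 p2 P1 P2 :: real
  assumes "p1 * b = p2 * a" "0 < a" "0 < b" "0 < A"
  shows "P1 / a^2 * (P2 / b^2) + p2 / (a * A * b^2) = (P1 * P2 + b * p1 / A) / (a^2 * b^2)"
proof -
  have "p2 / (a * A * b^2) = (p2 * a) / (a^2 * A * b^2)" using assms by (simp add: power2_eq_square)
  also have "\<dots> = b * p1 / A / (a^2 * b^2)" using assms(1) by (simp add: mult.commute)
  finally show ?thesis using assms by (simp add: add_divide_distrib power2_eq_square)
qed

lemma ln_exp_mult_div_squares:
  fixes N a b V :: real
  assumes "0 < N" "0 < a" "0 < b"
  shows "ln (exp (- V) * (N / (a^2 * b^2))) = - V + ln N - 2 * ln a - 2 * ln b"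
proof -
  have "ln (exp (- V) * (N / (a^2 * b^2))) = ln (exp (- V)) + ln (N / (a^2 * b^2))"
    by (rule ln_mult_pos) (use assms in auto)
  also have "ln (N / (a^2 * b^2)) = ln N - ln (a^2 * b^2)" by (rule ln_divide_pos) (use assms in auto)
  also have "ln (a^2 * b^2) = ln (a^2) + ln (b^2)" by (rule ln_mult_pos) (use assms in auto)
  also have "ln (a^2) = 2 * ln a" using assms by (simp add: ln_realpow)
  also have "ln (b^2) = 2 * ln b" using assms by (simp add: ln_realpow)
  finally show ?thesis by simp
qed

lemma ln_gdens_eq:
  assumes D: "0 < delta \<theta> h u" and ab: "0 < a" "0 < b"
  shows "ln (gdens \<theta> h u a b) = logdens_D (1/a) (1/b) b (ln (b/a)) (delta \<theta> h u) - 2 * ln a - 2 * ln b"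
proof -
  define D where "D = delta \<theta> h u"
  define A where "A = sqrt (2 * D)"
  define z where "z = ln (b / a)"
  have D0: "0 < D" using D by (simp add: D_def)
  have A0: "0 < A" using D0 by (simp add: A_def)
  have le: "0 \<le> D" using D0 by simp
  have w1: "Varg D a b = phi_arg z A" by (simp only: Varg_eq_phi_arg[OF le] A_def z_def)
  have w2: "Varg D b a = phi_arg (-z) A" by (simp only: Varg_eq_phi_arg[OF le] A_def z_def ln_div_swap[OF ab])
  have pid: "phi (phi_arg z A) * b = phi (phi_arg (-z) A) * a"
    using phi_Varg_swap[OF D0 ab] unfolding w1 w2 .
  have VVe: "Vdelta D a b = expmeas (1/a) (1/b) z A" unfolding Vdelta_def expmeas_def w1 w2 by simp
  have "gdens \<theta> h u a b = exp (- Vdelta D a b) *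
     (Phi (phi_arg z A) / a^2 * (Phi (phi_arg (-z) A) / b^2) + phi (phi_arg (-z) A) / (a * A * b^2))"
    using gdens_eq[OF D ab] unfolding D_def[symmetric] A_def[symmetric] w1 w2 .
  also have "Phi (phi_arg z A) / a^2 * (Phi (phi_arg (-z) A) / b^2) + phi (phi_arg (-z) A) / (a * A * b^2)
      = dens_factor b z A / (a^2 * b^2)"
    unfolding dens_factor_def by (rule density_sum_eq[OF pid ab A0])
  finally have g: "gdens \<theta> h u a b = exp (- Vdelta D a b) * (dens_factor b z A / (a^2 * b^2))" .
  have NA0: "0 < dens_factor b z A" using dens_factor_pos[OF A0] ab by simp
  have "ln (gdens \<theta> h u a b) = - Vdelta D a b + ln (dens_factor b z A) - 2 * ln a - 2 * ln b"
    unfolding g by (rule ln_exp_mult_div_squares[OF NA0 ab])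
  also have "\<dots> = logdens_D (1/a) (1/b) b z D - 2 * ln a - 2 * ln b"
    unfolding logdens_D_def logdens_A_def A_def[symmetric] VVe by simp
  finally show ?thesis unfolding D_def z_def .
qed

section \<open>Derivatives with respect to the parameter\<close>

definition lag_coord :: "real ^ 'd \<Rightarrow> real \<Rightarrow> 'd option \<Rightarrow> real" where
  "lag_coord h u k = (case k of Some j \<Rightarrow> h $ j | None \<Rightarrow> u)"

lemma delta_eq_sum_lag_coord: "delta \<theta> h u = (\<Sum>k\<in>UNIV. \<theta> $ (False, k) * \<bar>lag_coord h u k\<bar> powr \<theta> $ (True, k))"
proof -
  have "(\<Sum>k\<in>UNIV. \<theta> $ (False, k) * \<bar>lag_coord h u k\<bar> powr \<theta> $ (True, k))
     = \<theta> $ (False, None) * \<bar>u\<bar> powr \<theta> $ (True, None) +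
       (\<Sum>k\<in>range Some. \<theta> $ (False, k) * \<bar>lag_coord h u k\<bar> powr \<theta> $ (True, k))"
    unfolding UNIV_option_conv by (subst sum.insert) (auto simp: lag_coord_def)
  also have "(\<Sum>k\<in>range Some. \<theta> $ (False, k) * \<bar>lag_coord h u k\<bar> powr \<theta> $ (True, k))
     = (\<Sum>j\<in>UNIV. \<theta> $ (False, Some j) * \<bar>h $ j\<bar> powr \<theta> $ (True, Some j))"
    by (subst sum.reindex) (auto simp: lag_coord_def)
  finally show ?thesis unfolding delta_def by simp
qed

lemma lag_coord_nonzero:
  assumes "(h, u) \<noteq> (0, 0)"
  obtains k where "lag_coord h u k \<noteq> 0"
proof (cases "u = 0")
  case True
  then obtain j where "h $ j \<noteq> 0" using assms by (auto simp: vec_eq_iff)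
  then show ?thesis using that[of "Some j"] by (simp add: lag_coord_def)
next
  case False
  then show ?thesis using that[of None] by (simp add: lag_coord_def)
qed

lemma delta_pos:
  assumes "\<theta> \<in> admissible" "(h, u) \<noteq> (0, 0)"
  shows "0 < delta \<theta> h u"
proof -
  obtain k where k: "lag_coord h u k \<noteq> 0" using lag_coord_nonzero[OF assms(2)] .
  have "0 < \<theta> $ (False, l)" for l using assms(1) by (simp add: admissible_def)
  then show ?thesis
    unfolding delta_eq_sum_lag_coord using k by (intro sum_pos2[of _ k] mult_nonneg_nonneg mult_pos_pos less_imp_le powr_ge_zero) auto
qed

definition par_upd :: "'d::finite par \<Rightarrow> (bool \<times> 'd option) \<Rightarrow> real \<Rightarrow> 'd par" where
  "par_upd \<theta> i x = (\<chi> k. if k = i then x else \<theta> $ k)"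

lemma par_upd_nth: "par_upd \<theta> i x $ k = (if k = i then x else \<theta> $ k)"
  by (simp add: par_upd_def)

lemma par_upd_same: "par_upd \<theta> i (\<theta> $ i) = \<theta>"
  by (simp add: par_upd_def vec_eq_iff)

lemma pderiv_par_eq_deriv_par_upd: "pderiv_par i f \<theta> = deriv (\<lambda>x. f (par_upd \<theta> i x)) (\<theta> $ i)"
  by (simp add: pderiv_par_def par_upd_def)

text \<open>First and second partial derivatives of \<open>\<delta>\<close>; since \<open>ln 0 = 0\<close> in HOL they are also
  correct for a vanishing lag coordinate.\<close>

definition ddelta :: "real ^ 'd::finite \<Rightarrow> real \<Rightarrow> (bool \<times> 'd option) \<Rightarrow> 'd par \<Rightarrow> real" where
  "ddelta h u i \<theta> = (if fst i then \<theta> $ (False, snd i) * (ln \<bar>lag_coord h u (snd i)\<bar> * \<bar>lag_coord h u (snd i)\<bar> powr \<theta> $ i)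
      else \<bar>lag_coord h u (snd i)\<bar> powr \<theta> $ (True, snd i))"

lemma DERIV_const_powr: "((\<lambda>x. (a::real) powr x) has_real_derivative ln a * a powr x) (at x)"
  using has_real_derivative_const_powr[of "\<lambda>x. x" "\<lambda>_. 1" a] by simp

lemma DERIV_delta_par_upd:
  "((\<lambda>x. delta (par_upd \<theta> i x) h u) has_real_derivative ddelta h u i (par_upd \<theta> i x)) (at x)"
proof -
  obtain b k0 where i: "i = (b, k0)" by (cases i)
  have tm: "((\<lambda>x. par_upd \<theta> i x $ (False, k) * \<bar>lag_coord h u k\<bar> powr par_upd \<theta> i x $ (True, k)) has_real_derivative
      (if k = k0 then ddelta h u i (par_upd \<theta> i x) else 0)) (at x)" for k
  proof (cases "k = k0")
    case True
    show ?thesis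
    proof (cases b)
      case True
      then show ?thesis using \<open>k = k0\<close> i
        by (auto simp: par_upd_nth ddelta_def intro!: derivative_eq_intros DERIV_const_powr)
    next
      case False
      then show ?thesis using \<open>k = k0\<close> i
        by (auto simp: par_upd_nth ddelta_def intro!: derivative_eq_intros)
    qed
  next
    case False
    then show ?thesis using i by (auto simp: par_upd_nth intro!: derivative_eq_intros)
  qed
  have "((\<lambda>x. \<Sum>k\<in>UNIV. par_upd \<theta> i x $ (False, k) * \<bar>lag_coord h u k\<bar> powr par_upd \<theta> i x $ (True, k)) has_real_derivative
      (\<Sum>k\<in>UNIV. if k = k0 then ddelta h u i (par_upd \<theta> i x) else 0)) (at x)"
    by (rule DERIV_sum) (rule tm)
  then show ?thesis unfolding delta_eq_sum_lag_coord by simp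
qed

lemma DERIV_delta_par_upd_at:
  "((\<lambda>x. delta (par_upd \<theta> i x) h u) has_real_derivative ddelta h u i \<theta>) (at (\<theta> $ i))"
  using DERIV_delta_par_upd[of \<theta> i h u "\<theta> $ i"] by (simp add: par_upd_same)

definition ddelta2 :: "real ^ 'd::finite \<Rightarrow> real \<Rightarrow> (bool \<times> 'd option) \<Rightarrow> (bool \<times> 'd option) \<Rightarrow> 'd par \<Rightarrow> real" where
  "ddelta2 h u i j \<theta> = (if snd i = snd j then
     (if fst i \<and> fst j then \<theta> $ (False, snd i) * (ln \<bar>lag_coord h u (snd i)\<bar> * (ln \<bar>lag_coord h u (snd i)\<bar> * \<bar>lag_coord h u (snd i)\<bar> powr \<theta> $ (True, snd i)))
      else if fst i \<or> fst j then ln \<bar>lag_coord h u (snd i)\<bar> * \<bar>lag_coord h u (snd i)\<bar> powr \<theta> $ (True, snd i) else 0)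
     else 0)"

lemma DERIV_ddelta_par_upd:
  "((\<lambda>x. ddelta h u j (par_upd \<theta> i x)) has_real_derivative ddelta2 h u i j (par_upd \<theta> i x)) (at x)"
proof -
  obtain b k0 where i: "i = (b, k0)" by (cases i)
  obtain b' k1 where j: "j = (b', k1)" by (cases j)
  show ?thesis
  proof (cases "k0 = k1")
    case False
    have "(\<lambda>x. ddelta h u j (par_upd \<theta> i x)) = (\<lambda>x. ddelta h u j \<theta>)"
      using False i j by (auto simp: ddelta_def par_upd_nth fun_eq_iff)
    moreover have "ddelta2 h u i j (par_upd \<theta> i x) = 0" using False i j by (simp add: ddelta2_def)
    ultimately show ?thesis by simp
  next
    case True
    then show ?thesis using i j
      by (cases b; cases b') (auto simp: ddelta_def ddelta2_def par_upd_nth intro!: derivative_eq_intros DERIV_const_powr)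
  qed
qed

lemma DERIV_ddelta_par_upd_at:
  "((\<lambda>x. ddelta h u j (par_upd \<theta> i x)) has_real_derivative ddelta2 h u i j \<theta>) (at (\<theta> $ i))"
  using DERIV_ddelta_par_upd[of h u j \<theta> i "\<theta> $ i"] by (simp add: par_upd_same)

lemma DERIV_eventually_pos:
  assumes "(g has_real_derivative g') (at x)" "0 < g x"
  shows "eventually (\<lambda>y. 0 < g y) (nhds x)"
proof -
  have "isCont g x" by (rule DERIV_isCont[OF assms(1)])
  then have "(g \<longlongrightarrow> g x) (nhds x)" by (simp add: tendsto_nhds_iff isCont_def)
  then show ?thesis by (rule order_tendstoD(1)) (rule assms(2))
qed

definition ln_gdens_D :: "real \<Rightarrow> real \<Rightarrow> real \<Rightarrow> real" where
  "ln_gdens_D a b D = logdens_D (1/a) (1/b) b (ln (b/a)) D - 2 * ln a - 2 * ln b"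

lemma pderiv_ln_gdens:
  assumes "0 < delta \<theta> h u" "0 < a" "0 < b"
  shows "pderiv_par j (\<lambda>\<phi>. ln (gdens \<phi> h u a b)) \<theta>
      = logdens_D_d1 (1/a) (1/b) b (ln (b/a)) (delta \<theta> h u) * ddelta h u j \<theta>"
proof -
  have ev: "eventually (\<lambda>x. 0 < delta (par_upd \<theta> j x) h u) (nhds (\<theta> $ j))"
    by (rule DERIV_eventually_pos[OF DERIV_delta_par_upd_at]) (simp add: par_upd_same assms)
  have ev2: "eventually (\<lambda>x. ln (gdens (par_upd \<theta> j x) h u a b) = ln_gdens_D a b (delta (par_upd \<theta> j x) h u)) (nhds (\<theta> $ j))"
    using ev by eventually_elim (simp add: ln_gdens_eq assms ln_gdens_D_def)
  have "((\<lambda>x. ln_gdens_D a b (delta (par_upd \<theta> j x) h u)) has_real_derivative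
      logdens_D_d1 (1/a) (1/b) b (ln (b/a)) (delta \<theta> h u) * ddelta h u j \<theta>) (at (\<theta> $ j))"
    unfolding ln_gdens_D_def
    by (rule DERIV_cong[OF DERIV_diff[OF DERIV_diff[OF
        DERIV_chain2[OF DERIV_logdens_D DERIV_delta_par_upd_at] DERIV_const] DERIV_const]])
      (use assms in \<open>auto simp: par_upd_same\<close>)
  then show ?thesis unfolding pderiv_par_eq_deriv_par_upd
    by (subst deriv_cong_ev[OF ev2 refl]) (rule DERIV_imp_deriv)
qed

lemma pderiv2_ln_gdens:
  assumes "0 < delta \<theta> h u" "0 < a" "0 < b"
  shows "pderiv_par i (pderiv_par j (\<lambda>\<phi>. ln (gdens \<phi> h u a b))) \<theta>
      = logdens_D_d2 (1/a) (1/b) b (ln (b/a)) (delta \<theta> h u) * ddelta h u i \<theta> * ddelta h u j \<theta>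
        + logdens_D_d1 (1/a) (1/b) b (ln (b/a)) (delta \<theta> h u) * ddelta2 h u i j \<theta>"
proof -
  have ev: "eventually (\<lambda>x. 0 < delta (par_upd \<theta> i x) h u) (nhds (\<theta> $ i))"
    by (rule DERIV_eventually_pos[OF DERIV_delta_par_upd_at]) (simp add: par_upd_same assms)
  have ev2: "eventually (\<lambda>x. pderiv_par j (\<lambda>\<phi>. ln (gdens \<phi> h u a b)) (par_upd \<theta> i x)
      = logdens_D_d1 (1/a) (1/b) b (ln (b/a)) (delta (par_upd \<theta> i x) h u) * ddelta h u j (par_upd \<theta> i x)) (nhds (\<theta> $ i))"
    using ev by eventually_elim (rule pderiv_ln_gdens; use assms in auto)
  have "((\<lambda>x. logdens_D_d1 (1/a) (1/b) b (ln (b/a)) (delta (par_upd \<theta> i x) h u) * ddelta h u j (par_upd \<theta> i x)) has_real_derivative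
      logdens_D_d2 (1/a) (1/b) b (ln (b/a)) (delta \<theta> h u) * ddelta h u i \<theta> * ddelta h u j \<theta>
        + logdens_D_d1 (1/a) (1/b) b (ln (b/a)) (delta \<theta> h u) * ddelta2 h u i j \<theta>) (at (\<theta> $ i))"
    by (rule DERIV_cong[OF DERIV_mult[OF
        DERIV_chain2[OF DERIV_logdens_D_d1 DERIV_delta_par_upd_at] DERIV_ddelta_par_upd_at]])
      (use assms in \<open>auto simp: par_upd_same\<close>)
  then show ?thesis unfolding pderiv_par_eq_deriv_par_upd[of i "pderiv_par j (\<lambda>\<phi>. ln (gdens \<phi> h u a b))"]
    by (subst deriv_cong_ev[OF ev2 refl]) (rule DERIV_imp_deriv)
qed

section \<open>Polynomial bounds on the derivatives in \<open>A\<close>\<close>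

lemma abs_mult_le_power_add:
  fixes x y X :: real
  assumes "\<bar>x\<bar> \<le> X^i" "\<bar>y\<bar> \<le> X^j" "0 \<le> X"
  shows "\<bar>x * y\<bar> \<le> X^(i+j)"
  using assms by (simp add: abs_mult power_add mult_mono)

lemma phi_le_1: "phi x \<le> 1"
proof -
  have "phi x \<le> 1 / sqrt (2 * pi) * 1" unfolding std_normal_density_def
    by (intro mult_left_mono) auto
  also have "1 / sqrt (2 * pi) \<le> 1" using pi_gt3 by (simp add: real_le_rsqrt)
  finally show ?thesis by simp
qed

lemma phi_over_dens_factor_le:
  assumes A: "0 < A" and ab: "0 < a" "0 < b"
    and swap: "phi (phi_arg z A) * b = phi (phi_arg (-z) A) * a"
  shows "phi (phi_arg z A) / dens_factor b z A \<le> A / b"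
    and "phi (phi_arg (-z) A) / dens_factor b z A \<le> A / a"
    and "b * phi (phi_arg z A) / dens_factor b z A \<le> A"
proof -
  define N where "N = dens_factor b z A"
  have N: "0 < N" unfolding N_def using A ab by (intro dens_factor_pos) auto
  have "b * phi (phi_arg z A) \<le> A * N"
    using A ab by (simp add: N_def dens_factor_def field_simps Phi_nonneg)
  moreover have "a * phi (phi_arg (-z) A) = b * phi (phi_arg z A)" using swap by (simp add: mult.commute)
  ultimately show "phi (phi_arg z A) / N \<le> A / b" "phi (phi_arg (-z) A) / N \<le> A / a"
      "b * phi (phi_arg z A) / N \<le> A"
    using N ab by (simp_all add: field_simps)
qed

lemma abs_le_power_mono:
  fixes x X :: real
  assumes "1 \<le> X" "i \<le> k" "\<bar>x\<bar> \<le> X^i"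
  shows "\<bar>x\<bar> \<le> X^k"
  using assms order_trans power_increasing by blast

text \<open>Each atom below is bounded by a power of a single weight \<open>X \<ge> 1\<close> (bounds of degree one are
  written \<open>X^1\<close>), so that a product is bounded by \<open>X\<close> to the sum of the degrees.\<close>

context
  fixes a b z A X :: real
  assumes X: "1 \<le> X"
    and recip: "\<bar>1/a\<bar> \<le> X^1" "\<bar>1/b\<bar> \<le> X^1"
    and arg: "\<bar>phi_arg z A\<bar> \<le> X^1" "\<bar>phi_arg_d1 z A\<bar> \<le> X^1" "\<bar>phi_arg_d2 z A\<bar> \<le> X^1"
      "\<bar>phi_arg (-z) A\<bar> \<le> X^1" "\<bar>phi_arg_d1 (-z) A\<bar> \<le> X^1" "\<bar>phi_arg_d2 (-z) A\<bar> \<le> X^1"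
    and rho: "\<bar>rho z A\<bar> \<le> X^3" "\<bar>rho_d1 z A\<bar> \<le> X^4"
    and ratio: "\<bar>phi (phi_arg z A) / dens_factor b z A\<bar> \<le> X^1"
      "\<bar>phi (phi_arg (-z) A) / dens_factor b z A\<bar> \<le> X^1"
      "\<bar>b * phi (phi_arg z A) / dens_factor b z A\<bar> \<le> X^1"
    and dens_factor_pos: "0 < dens_factor b z A"
begin

lemma expmeas_d1_bound: "\<bar>expmeas_d1 (1/a) (1/b) z A\<bar> \<le> 2 * X^4"
proof -
  have X0: "0 \<le> X" using X by simp
  have P: "\<bar>phi x\<bar> \<le> X^0" for x by (simp add: phi_le_1)
  have "\<bar>1/a * (phi (phi_arg z A) * phi_arg_d1 z A)\<bar> \<le> X^4"
    by (rule abs_le_power_mono[OF X, where i="1+(0+1)"]) (simp, intro abs_mult_le_power_add recip arg P X0)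
  moreover have "\<bar>1/b * (phi (phi_arg (-z) A) * phi_arg_d1 (-z) A)\<bar> \<le> X^4"
    by (rule abs_le_power_mono[OF X, where i="1+(0+1)"]) (simp, intro abs_mult_le_power_add recip arg P X0)
  ultimately show ?thesis unfolding expmeas_d1_def by linarith
qed

lemma expmeas_d2_bound: "\<bar>expmeas_d2 (1/a) (1/b) z A\<bar> \<le> 4 * X^8"
proof -
  have X0: "0 \<le> X" using X by simp
  have P: "\<bar>phi x\<bar> \<le> X^0" for x by (simp add: phi_le_1)
  have sq: "\<bar>phi_arg_d1 c A ^ 2\<bar> \<le> X^(1+1)" if "\<bar>phi_arg_d1 c A\<bar> \<le> X^1" for c
    using abs_mult_le_power_add[OF that that X0] by (simp add: power2_eq_square)
  have "\<bar>1/a * (phi (phi_arg z A) * phi_arg_d2 z A)\<bar> \<le> X^8"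
    by (rule abs_le_power_mono[OF X, where i="1+(0+1)"]) (simp, intro abs_mult_le_power_add recip arg P X0)
  moreover have "\<bar>1/a * (phi_arg z A * phi (phi_arg z A) * phi_arg_d1 z A ^ 2)\<bar> \<le> X^8"
    by (rule abs_le_power_mono[OF X, where i="1+((1+0)+(1+1))"]) (simp, intro abs_mult_le_power_add recip arg P X0 sq)
  moreover have "\<bar>1/b * (phi (phi_arg (-z) A) * phi_arg_d2 (-z) A)\<bar> \<le> X^8"
    by (rule abs_le_power_mono[OF X, where i="1+(0+1)"]) (simp, intro abs_mult_le_power_add recip arg P X0)
  moreover have "\<bar>1/b * (phi_arg (-z) A * phi (phi_arg (-z) A) * phi_arg_d1 (-z) A ^ 2)\<bar> \<le> X^8"
    by (rule abs_le_power_mono[OF X, where i="1+((1+0)+(1+1))"]) (simp, intro abs_mult_le_power_add recip arg P X0 sq)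
  ultimately show ?thesis unfolding expmeas_d2_def right_diff_distrib by linarith
qed

lemma dens_factor_d1_ratio_bound: "\<bar>dens_factor_d1 b z A / dens_factor b z A\<bar> \<le> 3 * X^4"
proof -
  have X0: "0 \<le> X" using X by simp
  have P: "\<bar>Phi x\<bar> \<le> X^0" for x by (simp add: Phi_nonneg Phi_le_1)
  have "dens_factor_d1 b z A / dens_factor b z A
      = phi (phi_arg z A) / dens_factor b z A * phi_arg_d1 z A * Phi (phi_arg (-z) A)
        + Phi (phi_arg z A) * (phi (phi_arg (-z) A) / dens_factor b z A * phi_arg_d1 (-z) A)
        - b * phi (phi_arg z A) / dens_factor b z A * rho z A"
    by (simp add: dens_factor_d1_def add_divide_distrib diff_divide_distrib)
  moreover have "\<bar>phi (phi_arg z A) / dens_factor b z A * phi_arg_d1 z A * Phi (phi_arg (-z) A)\<bar> \<le> X^4"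
    by (rule abs_le_power_mono[OF X, where i="(1+1)+0"]) (simp, intro abs_mult_le_power_add ratio arg P X0)
  moreover have "\<bar>Phi (phi_arg z A) * (phi (phi_arg (-z) A) / dens_factor b z A * phi_arg_d1 (-z) A)\<bar> \<le> X^4"
    by (rule abs_le_power_mono[OF X, where i="0+(1+1)"]) (simp, intro abs_mult_le_power_add ratio arg P X0)
  moreover have "\<bar>b * phi (phi_arg z A) / dens_factor b z A * rho z A\<bar> \<le> X^4"
    by (rule abs_le_power_mono[OF X, where i="1+3"]) (simp, intro abs_mult_le_power_add ratio rho X0)
  ultimately show ?thesis by linarith
qed

lemma dens_factor_d2_ratio_bound: "\<bar>dens_factor_d2 b z A / dens_factor b z A\<bar> \<le> 10 * X^8"
proof -
  have X0: "0 \<le> X" using X by simp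
  have P: "\<bar>Phi x\<bar> \<le> X^0" "\<bar>phi x\<bar> \<le> X^0" for x by (simp_all add: Phi_nonneg Phi_le_1 phi_le_1)
  have sq: "\<bar>phi_arg_d1 c A ^ 2\<bar> \<le> X^(1+1)" if "\<bar>phi_arg_d1 c A\<bar> \<le> X^1" for c
    using abs_mult_le_power_add[OF that that X0] by (simp add: power2_eq_square)
  define N where "N = dens_factor b z A"
  define q1 q2 q3 where "q1 = phi (phi_arg z A) / N" and "q2 = phi (phi_arg (-z) A) / N"
    and "q3 = b * phi (phi_arg z A) / N"
  have q: "\<bar>q1\<bar> \<le> X^1" "\<bar>q2\<bar> \<le> X^1" "\<bar>q3\<bar> \<le> X^1"
    using ratio by (simp_all add: q1_def q2_def q3_def N_def)
  have "dens_factor_d2 b z A / N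
      = q1 * phi_arg_d2 z A * Phi (phi_arg (-z) A)
        - phi_arg z A * q1 * phi_arg_d1 z A ^ 2 * Phi (phi_arg (-z) A)
        + 2 * (q1 * phi_arg_d1 z A * phi (phi_arg (-z) A) * phi_arg_d1 (-z) A)
        + (Phi (phi_arg z A) * (q2 * phi_arg_d2 (-z) A)
           - Phi (phi_arg z A) * (phi_arg (-z) A * q2 * phi_arg_d1 (-z) A ^ 2))
        + (q3 * (phi_arg z A * phi_arg_d1 z A * rho z A) - q3 * rho_d1 z A)"
    using dens_factor_pos by (simp add: N_def q1_def q2_def q3_def dens_factor_d2_def field_simps)
  moreover have "\<bar>x1 - x2 + 2 * x3 + (x4 - x5) + (x6 - x7)\<bar>
      \<le> \<bar>x1\<bar> + \<bar>x2\<bar> + 2 * \<bar>x3\<bar> + \<bar>x4\<bar> + \<bar>x5\<bar> + \<bar>x6\<bar> + \<bar>x7\<bar>" for x1 x2 x3 x4 x5 x6 x7 :: real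
    by arith
  moreover have "\<bar>q1 * phi_arg_d2 z A * Phi (phi_arg (-z) A)\<bar> \<le> X^8"
    by (rule abs_le_power_mono[OF X, where i="(1+1)+0"]) (simp, intro abs_mult_le_power_add q arg P X0)
  moreover have "\<bar>phi_arg z A * q1 * phi_arg_d1 z A ^ 2 * Phi (phi_arg (-z) A)\<bar> \<le> X^8"
    by (rule abs_le_power_mono[OF X, where i="((1+1)+(1+1))+0"])
      (simp, intro abs_mult_le_power_add q arg P X0 sq)
  moreover have "\<bar>q1 * phi_arg_d1 z A * phi (phi_arg (-z) A) * phi_arg_d1 (-z) A\<bar> \<le> X^8"
    by (rule abs_le_power_mono[OF X, where i="((1+1)+0)+1"]) (simp, intro abs_mult_le_power_add q arg P X0)
  moreover have "\<bar>Phi (phi_arg z A) * (q2 * phi_arg_d2 (-z) A)\<bar> \<le> X^8"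
    by (rule abs_le_power_mono[OF X, where i="0+(1+1)"]) (simp, intro abs_mult_le_power_add q arg P X0)
  moreover have "\<bar>Phi (phi_arg z A) * (phi_arg (-z) A * q2 * phi_arg_d1 (-z) A ^ 2)\<bar> \<le> X^8"
    by (rule abs_le_power_mono[OF X, where i="0+((1+1)+(1+1))"])
      (simp, intro abs_mult_le_power_add q arg P X0 sq)
  moreover have "\<bar>q3 * (phi_arg z A * phi_arg_d1 z A * rho z A)\<bar> \<le> X^8"
    by (rule abs_le_power_mono[OF X, where i="1+((1+1)+3)"]) (simp, intro abs_mult_le_power_add q arg rho X0)
  moreover have "\<bar>q3 * rho_d1 z A\<bar> \<le> X^8"
    by (rule abs_le_power_mono[OF X, where i="1+4"]) (simp, intro abs_mult_le_power_add q rho X0)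
  ultimately show ?thesis unfolding N_def by (smt (verit))
qed

lemma logdens_A_d1_bound: "\<bar>logdens_A_d1 (1/a) (1/b) b z A\<bar> \<le> 5 * X^4"
  using expmeas_d1_bound dens_factor_d1_ratio_bound unfolding logdens_A_d1_def by linarith

lemma logdens_A_d2_bound: "\<bar>logdens_A_d2 (1/a) (1/b) b z A\<bar> \<le> 30 * X^8"
proof -
  have "(dens_factor_d1 b z A / dens_factor b z A)^2 = \<bar>dens_factor_d1 b z A / dens_factor b z A\<bar>^2"
    by (rule power2_abs[symmetric])
  also have "\<dots> \<le> (3 * X^4)^2" by (rule power_mono[OF dens_factor_d1_ratio_bound]) simp
  also have "\<dots> = 9 * X^8" by (simp add: power_mult_distrib flip: power_mult)
  finally show ?thesis
    using expmeas_d2_bound dens_factor_d2_ratio_bound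
      zero_le_power2[of "dens_factor_d1 b z A / dens_factor b z A"]
    unfolding logdens_A_d2_def by linarith
qed

end

lemma phi_arg_bounds:
  assumes a0: "0 < a0" "a0 \<le> A" "A \<le> a1" and c: "\<bar>c\<bar> \<le> T" and T: "1 \<le> T"
  shows "\<bar>phi_arg c A\<bar> \<le> (1 + 1/a0 + a1 + 1/a0^2 + 2/a0^3) * T"
    and "\<bar>phi_arg_d1 c A\<bar> \<le> (1 + 1/a0 + a1 + 1/a0^2 + 2/a0^3) * T"
    and "\<bar>phi_arg_d2 c A\<bar> \<le> (1 + 1/a0 + a1 + 1/a0^2 + 2/a0^3) * T"
proof -
  have A0: "0 < A" using a0 by simp
  have i1: "1/A \<le> 1/a0" using a0 by (simp add: frac_le)
  have i2: "1/A^2 \<le> 1/a0^2" using a0 by (simp add: frac_le power_mono)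
  have i3: "1/A^3 \<le> 1/a0^3" using a0 by (simp add: frac_le power_mono)
  have p1: "0 \<le> 1/a0" "0 \<le> 1/a0^2" "0 \<le> 1/a0^3" "0 \<le> a1" using a0 by auto
  have ex: "(1 + 1/a0 + a1 + 1/a0^2 + 2/a0^3) * T = T + (1/a0) * T + a1 * T + (1/a0^2) * T + 2 * ((1/a0^3) * T)"
    by (simp add: algebra_simps)
  have nn: "0 \<le> (1/a0) * T" "0 \<le> a1 * T" "0 \<le> (1/a0^2) * T" "0 \<le> (1/a0^3) * T"
    using p1 T by auto
  have a1T: "a1 \<le> a1 * T" using mult_left_mono[OF T p1(4)] by simp
  have m1: "\<bar>c\<bar> * (1/A) \<le> (1/a0) * T" using mult_mono[OF c i1] T A0 by (simp add: mult.commute)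
  have m2: "\<bar>c\<bar> * (1/A^2) \<le> (1/a0^2) * T" using mult_mono[OF c i2] T A0 by (simp add: mult.commute)
  have m3: "\<bar>c\<bar> * (1/A^3) \<le> (1/a0^3) * T" using mult_mono[OF c i3] T A0 by (simp add: mult.commute)
  have e1: "\<bar>c / A\<bar> = \<bar>c\<bar> * (1/A)" using A0 by (simp add: abs_divide)
  have e2: "\<bar>A / 2\<bar> = A / 2" using A0 by simp
  have "\<bar>phi_arg c A\<bar> \<le> \<bar>c\<bar> * (1/A) + A/2" 
    unfolding phi_arg_def using abs_triangle_ineq[of "c/A" "A/2"] e1 e2 by linarith
  then show "\<bar>phi_arg c A\<bar> \<le> (1 + 1/a0 + a1 + 1/a0^2 + 2/a0^3) * T"
    unfolding ex using m1 nn a1T a0 T by linarith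
  have e3: "\<bar>- c / A^2\<bar> = \<bar>c\<bar> * (1/A^2)" using A0 by (simp add: abs_divide)
  have "\<bar>phi_arg_d1 c A\<bar> \<le> \<bar>c\<bar> * (1/A^2) + 1/2"
    unfolding phi_arg_d1_def using abs_triangle_ineq[of "- c/A^2" "1/2"] e3 by simp
  then show "\<bar>phi_arg_d1 c A\<bar> \<le> (1 + 1/a0 + a1 + 1/a0^2 + 2/a0^3) * T"
    unfolding ex using m2 nn a1T T by linarith
  have "\<bar>phi_arg_d2 c A\<bar> = 2 * (\<bar>c\<bar> * (1/A^3))" unfolding phi_arg_d2_def using A0
    by (simp add: abs_mult abs_divide)
  then show "\<bar>phi_arg_d2 c A\<bar> \<le> (1 + 1/a0 + a1 + 1/a0^2 + 2/a0^3) * T"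
    unfolding ex using m3 nn a1T T by linarith
qed

lemma rho_bounds:
  assumes X: "1 \<le> X" and A: "0 < A"
    and w: "\<bar>phi_arg z A\<bar> \<le> X^1" "\<bar>phi_arg_d1 z A\<bar> \<le> X^1" "\<bar>phi_arg_d2 z A\<bar> \<le> X^1" "\<bar>1/A\<bar> \<le> X^1"
  shows "\<bar>rho z A\<bar> \<le> 2 * X^3" and "\<bar>rho_d1 z A\<bar> \<le> 5 * X^4"
proof -
  have X0: "0 \<le> X" using X by simp
  have e: "rho z A = phi_arg z A * phi_arg_d1 z A * (1/A) + (1/A) * (1/A)"
    unfolding rho_def using A by (simp add: field_simps power2_eq_square)
  have t1: "\<bar>phi_arg z A * phi_arg_d1 z A * (1/A)\<bar> \<le> X^3" using abs_mult_le_power_add[OF abs_mult_le_power_add[OF w(1) w(2) X0] w(4) X0] by (simp add: power3_eq_cube mult.assoc)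
  have t2: "\<bar>(1/A) * (1/A)\<bar> \<le> X^(1+1)" by (intro abs_mult_le_power_add w X0)
  have "X^(1+1) \<le> X^3" by (rule power_increasing[OF _ X]) simp
  then show "\<bar>rho z A\<bar> \<le> 2 * X^3" unfolding e using t1 t2 abs_triangle_ineq[of "phi_arg z A * phi_arg_d1 z A * (1/A)" "(1/A) * (1/A)"]
    by linarith
  have e1: "rho_d1 z A = phi_arg_d1 z A * phi_arg_d1 z A * (1/A) + phi_arg z A * phi_arg_d2 z A * (1/A) - phi_arg z A * phi_arg_d1 z A * ((1/A) * (1/A))
      - 2 * ((1/A) * (1/A) * (1/A))"
    unfolding rho_d1_def using A by (simp add: field_simps power2_eq_square power3_eq_cube)
  have s1: "\<bar>phi_arg_d1 z A * phi_arg_d1 z A * (1/A)\<bar> \<le> X^((1+1)+1)" by (intro abs_mult_le_power_add w X0)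
  have s2: "\<bar>phi_arg z A * phi_arg_d2 z A * (1/A)\<bar> \<le> X^((1+1)+1)" by (intro abs_mult_le_power_add w X0)
  have s3: "\<bar>phi_arg z A * phi_arg_d1 z A * ((1/A) * (1/A))\<bar> \<le> X^((1+1)+(1+1))" by (intro abs_mult_le_power_add w X0)
  have s4: "\<bar>(1/A) * (1/A) * (1/A)\<bar> \<le> X^((1+1)+1)" by (intro abs_mult_le_power_add w X0)
  have "X^((1+1)+1) \<le> X^4" by (rule power_increasing[OF _ X]) simp
  moreover have "X^((1+1)+(1+1)) = X^4" by (rule arg_cong[where f="\<lambda>n. X^n"]) simp
  moreover have "\<bar>phi_arg_d1 z A * phi_arg_d1 z A * (1/A) + phi_arg z A * phi_arg_d2 z A * (1/A) - phi_arg z A * phi_arg_d1 z A * ((1/A) * (1/A))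
      - 2 * ((1/A) * (1/A) * (1/A))\<bar> \<le> \<bar>phi_arg_d1 z A * phi_arg_d1 z A * (1/A)\<bar> + \<bar>phi_arg z A * phi_arg_d2 z A * (1/A)\<bar>
      + \<bar>phi_arg z A * phi_arg_d1 z A * ((1/A) * (1/A))\<bar> + 2 * \<bar>(1/A) * (1/A) * (1/A)\<bar>"
    by arith
  ultimately show "\<bar>rho_d1 z A\<bar> \<le> 5 * X^4" unfolding e1 using s1 s2 s3 s4 by linarith
qed

lemma logdens_A_bounds:
  fixes a b A a0 a1 :: real
  assumes A: "0 < a0" "a0 \<le> A" "A \<le> a1" and ab: "0 < a" "0 < b"
    and swap: "phi (phi_arg z A) * b = phi (phi_arg (-z) A) * a"
    and X: "X = 2 * (1 + 1/a0 + a1 + 1/a0^2 + 2/a0^3) * (1 + \<bar>z\<bar> + 1/a + 1/b)"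
  shows "\<bar>logdens_A_d1 (1/a) (1/b) b z A\<bar> \<le> 5 * X^4"
    and "\<bar>logdens_A_d2 (1/a) (1/b) b z A\<bar> \<le> 30 * X^8"
proof -
  define M T where "M = 1 + 1/a0 + a1 + 1/a0^2 + 2/a0^3" and "T = 1 + \<bar>z\<bar> + 1/a + 1/b"
  define Y where "Y = M * T"
  have A0: "0 < A" using A by simp
  have M: "1 \<le> M" "1/a0 \<le> M" "a1 \<le> M" using A by (auto simp: M_def)
  have T: "1 \<le> T" "\<bar>z\<bar> \<le> T" "\<bar>-z\<bar> \<le> T" "1/a \<le> T" "1/b \<le> T" using ab by (auto simp: T_def)
  have "M \<le> Y" "T \<le> Y"
    using mult_left_mono[OF T(1), of M] mult_right_mono[OF M(1), of T] M(1) by (simp_all add: Y_def)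
  then have Y: "1 \<le> Y" "M \<le> Y" "T \<le> Y" using M(1) by linarith+
  have XY: "X = 2 * Y" by (simp add: X Y_def M_def T_def)
  have X1: "1 \<le> X" using XY Y(1) by simp
  have le_X: "\<bar>y\<bar> \<le> X^1" if "\<bar>y\<bar> \<le> Y" for y using that XY Y(1) by simp
  have arg_Y: "\<bar>phi_arg c A\<bar> \<le> Y" "\<bar>phi_arg_d1 c A\<bar> \<le> Y" "\<bar>phi_arg_d2 c A\<bar> \<le> Y" if "\<bar>c\<bar> \<le> T" for c
    using phi_arg_bounds[OF A that T(1), folded M_def, folded Y_def] .
  have "1/A \<le> 1/a0" using A by (simp add: frac_le)
  then have recip_A: "\<bar>1/A\<bar> \<le> Y" using A0 M(2) Y(2) by simp
  have rho_Y: "\<bar>rho z A\<bar> \<le> 2 * Y^3" "\<bar>rho_d1 z A\<bar> \<le> 5 * Y^4"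
    using rho_bounds[OF Y(1) A0] arg_Y[OF T(2)] recip_A by simp_all
  have rho: "\<bar>rho z A\<bar> \<le> X^3" "\<bar>rho_d1 z A\<bar> \<le> X^4"
    using rho_Y Y(1) by (simp_all add: XY power_mult_distrib)
  have ratio_le: "A / b \<le> Y" "A / a \<le> Y" "A \<le> Y"
  proof -
    have "A / b \<le> a1 * T" "A / a \<le> a1 * T"
      using A ab T(4,5) by (auto simp: divide_inverse intro!: mult_mono)
    moreover have "a1 * T \<le> Y" using M(3) T(1) by (auto simp: Y_def intro!: mult_right_mono)
    ultimately show "A / b \<le> Y" "A / a \<le> Y" by linarith+
    show "A \<le> Y" using A M(3) Y(2) by linarith
  qed
  have dens_pos: "0 < dens_factor b z A" using A0 ab by (intro dens_factor_pos) auto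
  note ratio = phi_over_dens_factor_le[OF A0 ab swap]
  have ratio_X: "\<bar>phi (phi_arg z A) / dens_factor b z A\<bar> \<le> X^1"
      "\<bar>phi (phi_arg (-z) A) / dens_factor b z A\<bar> \<le> X^1"
      "\<bar>b * phi (phi_arg z A) / dens_factor b z A\<bar> \<le> X^1"
  proof -
    have "0 \<le> phi (phi_arg z A) / dens_factor b z A" "0 \<le> phi (phi_arg (-z) A) / dens_factor b z A"
        "0 \<le> b * phi (phi_arg z A) / dens_factor b z A"
      using dens_pos ab by simp_all
    then show "\<bar>phi (phi_arg z A) / dens_factor b z A\<bar> \<le> X^1"
        "\<bar>phi (phi_arg (-z) A) / dens_factor b z A\<bar> \<le> X^1"
        "\<bar>b * phi (phi_arg z A) / dens_factor b z A\<bar> \<le> X^1"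
      using ratio ratio_le XY Y(1) unfolding power_one_right by linarith+
  qed
  have recip: "\<bar>1/a\<bar> \<le> X^1" "\<bar>1/b\<bar> \<le> X^1"
  proof -
    have "0 < 1/a" "0 < 1/b" using ab by simp_all
    then show "\<bar>1/a\<bar> \<le> X^1" "\<bar>1/b\<bar> \<le> X^1"
      using T(4,5) Y(3) XY Y(1) unfolding power_one_right by linarith+
  qed
  note bounds = X1 recip arg_Y[OF T(2), THEN le_X] arg_Y[OF T(3), THEN le_X] rho ratio_X dens_pos
  show "\<bar>logdens_A_d1 (1/a) (1/b) b z A\<bar> \<le> 5 * X^4" by (rule logdens_A_d1_bound[OF bounds])
  show "\<bar>logdens_A_d2 (1/a) (1/b) b z A\<bar> \<le> 30 * X^8" by (rule logdens_A_d2_bound[OF bounds])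
qed

lemma phi_phi_arg_swap:
  assumes D0: "0 < D" and ab: "0 < a" "0 < b"
  shows "phi (phi_arg (ln (b/a)) (sqrt (2*D))) * b = phi (phi_arg (- ln (b/a)) (sqrt (2*D))) * a"
proof -
  have le: "0 \<le> D" using D0 by simp
  have w1: "Varg D a b = phi_arg (ln (b/a)) (sqrt (2*D))" by (simp only: Varg_eq_phi_arg[OF le])
  have w2: "Varg D b a = phi_arg (- ln (b/a)) (sqrt (2*D))" by (simp only: Varg_eq_phi_arg[OF le] ln_div_swap[OF ab])
  show ?thesis using phi_Varg_swap[OF D0 ab] unfolding w1 w2 .
qed

definition weight_const :: "real \<Rightarrow> real \<Rightarrow> real" where
  "weight_const D0 D1 = 1 + 1/sqrt (2*D0) + sqrt (2*D1) + 1/sqrt (2*D0)^2 + 2/sqrt (2*D0)^3"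

definition poly_weight :: "real \<Rightarrow> real \<Rightarrow> real \<Rightarrow> real \<Rightarrow> real" where
  "poly_weight D0 D1 a b = 2 * weight_const D0 D1 * (1 + \<bar>ln (b/a)\<bar> + 1/a + 1/b)"

lemma poly_weight_ge_1: "0 < D0 \<Longrightarrow> D0 \<le> D1 \<Longrightarrow> 0 < a \<Longrightarrow> 0 < b \<Longrightarrow> 1 \<le> poly_weight D0 D1 a b"
proof -
  assume a: "0 < D0" "D0 \<le> D1" "0 < a" "0 < b"
  have sp: "0 < sqrt (2*D0)" using a by simp
  have "0 \<le> 1/sqrt (2*D0)" "0 \<le> sqrt (2*D1)" "0 \<le> 1/sqrt (2*D0)^2" "0 \<le> 2/sqrt (2*D0)^3"
    using sp a by auto
  then have "1 \<le> weight_const D0 D1" unfolding weight_const_def by linarith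
  moreover have "1 \<le> 1 + \<bar>ln (b/a)\<bar> + 1/a + 1/b" using a by simp
  ultimately have "1 * 1 \<le> weight_const D0 D1 * (1 + \<bar>ln (b/a)\<bar> + 1/a + 1/b)" by (intro mult_mono) auto
  then show ?thesis by (simp add: poly_weight_def)
qed

lemma logdens_D_bounds:
  assumes D: "0 < D0" "D0 \<le> D" "D \<le> D1" and ab: "0 < a" "0 < b"
  shows "\<bar>logdens_D_d1 (1/a) (1/b) b (ln (b/a)) D\<bar> \<le> (5 / sqrt (2*D0)) * poly_weight D0 D1 a b ^ 8"
    and "\<bar>logdens_D_d2 (1/a) (1/b) b (ln (b/a)) D\<bar> \<le> ((30 + 5 / sqrt (2*D0)) / (2*D0)) * poly_weight D0 D1 a b ^ 8"
proof -
  define A where "A = sqrt (2*D)"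
  define a0 where "a0 = sqrt (2*D0)"
  define X where "X = poly_weight D0 D1 a b"
  have a0p: "0 < a0" using D by (simp add: a0_def)
  have Aa: "a0 \<le> A" "A \<le> sqrt (2*D1)" using D by (auto simp: A_def a0_def)
  have A0: "0 < A" using a0p Aa by simp
  have X1: "1 \<le> X" unfolding X_def by (rule poly_weight_ge_1) (use D ab in auto)
  have Xd: "X = 2 * (1 + 1/a0 + sqrt (2*D1) + 1/a0^2 + 2/a0^3) * (1 + \<bar>ln (b/a)\<bar> + 1/a + 1/b)"
    by (simp add: X_def poly_weight_def weight_const_def a0_def)
  have Dp: "0 < D" using D by simp
  note lb = logdens_A_bounds[OF a0p Aa ab phi_phi_arg_swap[OF Dp ab, folded A_def] Xd]
  have lb1: "\<bar>logdens_A_d1 (1/a) (1/b) b (ln (b/a)) A\<bar> \<le> 5 * X^8"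
    using lb(1) power_increasing[OF _ X1, of 4 8] D by simp
  have iA: "1/A \<le> 1/a0" using a0p Aa by (simp add: frac_le)
  have "\<bar>logdens_D_d1 (1/a) (1/b) b (ln (b/a)) D\<bar> = \<bar>logdens_A_d1 (1/a) (1/b) b (ln (b/a)) A\<bar> * (1/A)"
    unfolding logdens_D_d1_def A_def[symmetric] using A0 by (simp add: abs_divide)
  also have "\<dots> \<le> (5 * X^8) * (1/a0)" by (intro mult_mono lb1 iA) (use A0 in auto)
  finally show "\<bar>logdens_D_d1 (1/a) (1/b) b (ln (b/a)) D\<bar> \<le> (5 / sqrt (2*D0)) * poly_weight D0 D1 a b ^ 8"
    by (simp add: a0_def X_def)
  have t: "\<bar>logdens_A_d2 (1/a) (1/b) b (ln (b/a)) A - logdens_A_d1 (1/a) (1/b) b (ln (b/a)) A / A\<bar> \<le> (30 + 5/a0) * X^8"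
  proof -
    have "\<bar>logdens_A_d1 (1/a) (1/b) b (ln (b/a)) A / A\<bar> = \<bar>logdens_A_d1 (1/a) (1/b) b (ln (b/a)) A\<bar> * (1/A)"
      using A0 by (simp add: abs_divide)
    also have "\<dots> \<le> (5 * X^8) * (1/a0)" by (intro mult_mono lb1 iA) (use A0 in auto)
    finally have "\<bar>logdens_A_d1 (1/a) (1/b) b (ln (b/a)) A / A\<bar> \<le> (5/a0) * X^8" by simp
    then show ?thesis using lb(2) abs_triangle_ineq4[of "logdens_A_d2 (1/a) (1/b) b (ln (b/a)) A" "logdens_A_d1 (1/a) (1/b) b (ln (b/a)) A / A"]
      by (simp add: distrib_right)
  qed
  have "\<bar>logdens_D_d2 (1/a) (1/b) b (ln (b/a)) D\<bar>
      = \<bar>logdens_A_d2 (1/a) (1/b) b (ln (b/a)) A - logdens_A_d1 (1/a) (1/b) b (ln (b/a)) A / A\<bar> * (1 / (2*D))"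
    unfolding logdens_D_d2_def A_def[symmetric] using D by (simp add: abs_divide)
  also have "\<dots> \<le> ((30 + 5/a0) * X^8) * (1 / (2*D0))"
    by (intro mult_mono t) (use D a0p in \<open>auto simp: frac_le\<close>)
  finally show "\<bar>logdens_D_d2 (1/a) (1/b) b (ln (b/a)) D\<bar> \<le> ((30 + 5 / sqrt (2*D0)) / (2*D0)) * poly_weight D0 D1 a b ^ 8"
    by (simp add: a0_def X_def)
qed

section \<open>Uniform bounds over a compact parameter set\<close>

lemma powr_le_1_plus_square: assumes "0 \<le> (x::real)" "0 < e" "e \<le> 2" shows "x powr e \<le> 1 + x^2"
proof (cases "x \<le> 1")
  case True
  then have "x powr e \<le> 1" using assms by (intro powr_le1) auto
  then show ?thesis by (smt (verit) zero_le_power2)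
next
  case False
  then have "x powr e \<le> x powr 2" using assms by (intro powr_mono) auto
  also have "x powr 2 = x^2" using False by (simp add: powr_numeral)
  finally show ?thesis by simp
qed

lemma min_1_square_le_powr: assumes "0 < (x::real)" "0 < e" "e \<le> 2" shows "min 1 (x^2) \<le> x powr e"
proof (cases "x \<le> 1")
  case True
  have "x powr 2 \<le> x powr e" using assms True by (intro powr_mono') auto
  moreover have "x powr 2 = x^2" using assms by (simp add: powr_numeral)
  ultimately show ?thesis by simp
next
  case False
  then have "1 \<le> x powr e" using assms by (intro ge_one_powr_ge_zero) auto
  then show ?thesis by simp
qed

definition ddelta_majorant :: "real \<Rightarrow> real \<Rightarrow> real" where
  "ddelta_majorant R v = (1 + R) * (1 + \<bar>ln v\<bar>)^2 * (1 + v^2)"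

lemma ddelta_majorant_bounds:
  fixes v e C R :: real
  assumes v: "0 \<le> v" and e: "0 < e" "e \<le> 2" and C: "0 < C" "C \<le> R"
  shows "\<bar>v powr e\<bar> \<le> ddelta_majorant R v"
    and "\<bar>ln v * v powr e\<bar> \<le> ddelta_majorant R v"
    and "\<bar>C * (ln v * v powr e)\<bar> \<le> ddelta_majorant R v"
    and "\<bar>C * (ln v * (ln v * v powr e))\<bar> \<le> ddelta_majorant R v"
proof -
  have pe: "v powr e \<le> 1 + v^2" "0 \<le> v powr e" using powr_le_1_plus_square[OF v e] by auto
  define L where "L = (1 + \<bar>ln v\<bar>)^2"
  have L: "1 \<le> L" "\<bar>ln v\<bar> \<le> L" "\<bar>ln v\<bar> * \<bar>ln v\<bar> \<le> L" unfolding L_def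
    by (auto simp: power2_eq_square algebra_simps)
  have R: "1 \<le> 1 + R" "R \<le> 1 + R" "0 \<le> R" using C by auto
  have maj: "c * l * (1 + v^2) \<le> ddelta_majorant R v" if "0 \<le> c" "c \<le> 1 + R" "0 \<le> l" "l \<le> L" for c l
    unfolding ddelta_majorant_def L_def[symmetric] using that by (intro mult_right_mono mult_mono) auto
  have "\<bar>v powr e\<bar> \<le> 1 * 1 * (1 + v^2)" using pe by simp
  also have "\<dots> \<le> ddelta_majorant R v" using L R by (intro maj) auto
  finally show "\<bar>v powr e\<bar> \<le> ddelta_majorant R v" .
  have "\<bar>ln v * v powr e\<bar> \<le> 1 * \<bar>ln v\<bar> * (1 + v^2)"
    using pe by (simp add: abs_mult) (intro mult_left_mono; simp)
  also have "\<dots> \<le> ddelta_majorant R v" using L R by (intro maj) auto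
  finally show "\<bar>ln v * v powr e\<bar> \<le> ddelta_majorant R v" .
  have "\<bar>C * (ln v * v powr e)\<bar> \<le> R * \<bar>ln v\<bar> * (1 + v^2)"
    using C pe by (simp add: abs_mult mult.assoc) (intro mult_mono; simp)
  also have "\<dots> \<le> ddelta_majorant R v" using L R by (intro maj) auto
  finally show "\<bar>C * (ln v * v powr e)\<bar> \<le> ddelta_majorant R v" .
  have "\<bar>C * (ln v * (ln v * v powr e))\<bar> = C * ((\<bar>ln v\<bar> * \<bar>ln v\<bar>) * v powr e)"
    using C(1) pe(2) by (simp add: abs_mult)
  also have "\<dots> \<le> R * (\<bar>ln v\<bar> * \<bar>ln v\<bar>) * (1 + v^2)"
    unfolding mult.assoc by (intro mult_mono mult_left_mono pe) (use C in auto)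
  also have "\<dots> \<le> ddelta_majorant R v" using L R by (intro maj) auto
  finally show "\<bar>C * (ln v * (ln v * v powr e))\<bar> \<le> ddelta_majorant R v" .
qed

lemma ddelta_bounds:
  assumes adm: "\<theta> \<in> admissible" and R: "\<And>k. \<bar>\<theta> $ k\<bar> \<le> R"
  shows "\<bar>ddelta h u i \<theta>\<bar> \<le> ddelta_majorant R \<bar>lag_coord h u (snd i)\<bar>"
    and "\<bar>ddelta2 h u i j \<theta>\<bar> \<le> ddelta_majorant R \<bar>lag_coord h u (snd i)\<bar>"
proof -
  define v e C where "v = \<bar>lag_coord h u (snd i)\<bar>" and "e = \<theta> $ (True, snd i)"
    and "C = \<theta> $ (False, snd i)"
  have e: "0 < e" "e \<le> 2" using adm by (auto simp: admissible_def e_def)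
  have C: "0 < C" "C \<le> R" using adm R[of "(False, snd i)"] by (auto simp: admissible_def C_def)
  have v: "0 \<le> v" by (simp add: v_def)
  note maj = ddelta_majorant_bounds[OF v e C]
  have "ddelta h u i \<theta> = (if fst i then C * (ln v * v powr e) else v powr e)"
    by (cases i) (simp add: ddelta_def v_def e_def C_def)
  then show "\<bar>ddelta h u i \<theta>\<bar> \<le> ddelta_majorant R \<bar>lag_coord h u (snd i)\<bar>"
    using maj unfolding v_def[symmetric] by simp
  have "ddelta2 h u i j \<theta> = (if snd i = snd j then (if fst i \<and> fst j then C * (ln v * (ln v * v powr e))
       else if fst i \<or> fst j then ln v * v powr e else 0) else 0)"
    by (simp add: ddelta2_def v_def e_def C_def)
  moreover have "0 \<le> ddelta_majorant R v" using maj(1) by linarith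
  ultimately show "\<bar>ddelta2 h u i j \<theta>\<bar> \<le> ddelta_majorant R \<bar>lag_coord h u (snd i)\<bar>"
    using maj unfolding v_def[symmetric] by simp
qed

lemma ddelta_majorant_nonneg: "0 \<le> R \<Longrightarrow> 0 \<le> ddelta_majorant R v"
  by (simp add: ddelta_majorant_def)

lemma delta_uniform_lower_bound:
  fixes \<Theta> :: "'d::finite par set"
  assumes "compact \<Theta>" "\<Theta> \<subseteq> admissible" "\<Theta> \<noteq> {}" "(h, u) \<noteq> (0, 0)"
  obtains D0 where "0 < D0" "\<And>\<theta>. \<theta> \<in> \<Theta> \<Longrightarrow> D0 \<le> delta \<theta> h u"
proof -
  obtain k0 where "lag_coord h u k0 \<noteq> 0" using lag_coord_nonzero[OF assms(4)] .
  then have v0: "0 < \<bar>lag_coord h u k0\<bar>" by simp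
  have "continuous_on \<Theta> (\<lambda>\<theta>. \<theta> $ (False, k0))" by (intro continuous_intros)
  then obtain \<theta>m where \<theta>m: "\<theta>m \<in> \<Theta>" "\<And>\<theta>. \<theta> \<in> \<Theta> \<Longrightarrow> \<theta>m $ (False, k0) \<le> \<theta> $ (False, k0)"
    using continuous_attains_inf[OF assms(1,3)] by blast
  define D0 where "D0 = \<theta>m $ (False, k0) * min 1 (\<bar>lag_coord h u k0\<bar>^2)"
  show ?thesis
  proof (rule that)
    show "0 < D0" using \<theta>m(1) assms(2) v0 by (auto simp: D0_def admissible_def)
    fix \<theta> assume \<theta>: "\<theta> \<in> \<Theta>"
    then have adm: "0 < \<theta> $ (False, k)" "0 < \<theta> $ (True, k)" "\<theta> $ (True, k) \<le> 2" for k
      using assms(2) by (auto simp: admissible_def)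
    have "D0 \<le> \<theta> $ (False, k0) * \<bar>lag_coord h u k0\<bar> powr \<theta> $ (True, k0)"
      unfolding D0_def using adm
      by (intro mult_mono min_1_square_le_powr v0 \<theta>m(2)[OF \<theta>] less_imp_le[OF adm(1)]) auto
    also have "\<dots> \<le> delta \<theta> h u" unfolding delta_eq_sum_lag_coord
      by (rule member_le_sum) (auto intro!: mult_nonneg_nonneg less_imp_le[OF adm(1)] powr_ge_zero)
    finally show "D0 \<le> delta \<theta> h u" .
  qed
qed

lemma delta_le_sum_square_lags:
  assumes "\<theta> \<in> admissible" "\<And>k. \<bar>\<theta> $ k\<bar> \<le> R"
  shows "delta \<theta> h u \<le> (\<Sum>k\<in>UNIV. R * (1 + \<bar>lag_coord h u k\<bar>^2))"
  unfolding delta_eq_sum_lag_coord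
proof (rule sum_mono)
  fix k
  have "\<bar>lag_coord h u k\<bar> powr \<theta> $ (True, k) \<le> 1 + \<bar>lag_coord h u k\<bar>^2"
    using assms(1) by (intro powr_le_1_plus_square) (auto simp: admissible_def)
  then show "\<theta> $ (False, k) * \<bar>lag_coord h u k\<bar> powr \<theta> $ (True, k) \<le> R * (1 + \<bar>lag_coord h u k\<bar>^2)"
    using assms(1) assms(2)[of "(False, k)"] by (intro mult_mono) (auto simp: admissible_def)
qed

lemma delta_uniform_bounds:
  fixes \<Theta> :: "'d::finite par set"
  assumes "compact \<Theta>" "\<Theta> \<subseteq> admissible" "\<Theta> \<noteq> {}" "(h, u) \<noteq> (0, 0)"
  obtains D0 D1 Kd where "0 < D0" "D0 \<le> D1"
    and "\<And>\<theta>. \<theta> \<in> \<Theta> \<Longrightarrow> D0 \<le> delta \<theta> h u \<and> delta \<theta> h u \<le> D1"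
    and "\<And>\<theta> i j. \<theta> \<in> \<Theta> \<Longrightarrow> \<bar>ddelta h u i \<theta>\<bar> \<le> Kd \<and> \<bar>ddelta2 h u i j \<theta>\<bar> \<le> Kd"
proof -
  obtain R where R: "\<And>\<theta>. \<theta> \<in> \<Theta> \<Longrightarrow> norm \<theta> \<le> R"
    using compact_imp_bounded[OF assms(1)] unfolding bounded_iff by blast
  have R_coord: "\<bar>\<theta> $ k\<bar> \<le> R" if "\<theta> \<in> \<Theta>" for \<theta> k
    using component_le_norm_cart[of \<theta> k] R[OF that] by simp
  obtain \<theta>0 where \<theta>0: "\<theta>0 \<in> \<Theta>" using assms(3) by auto
  have R0: "0 \<le> R" using R_coord[OF \<theta>0, of "(False, None)"] by simp
  obtain D0 where D0: "0 < D0" "\<And>\<theta>. \<theta> \<in> \<Theta> \<Longrightarrow> D0 \<le> delta \<theta> h u"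
    using delta_uniform_lower_bound[OF assms] by blast
  define D1 where "D1 = (\<Sum>k\<in>UNIV. R * (1 + \<bar>lag_coord h u k\<bar>^2))"
  define Kd where "Kd = (\<Sum>k\<in>UNIV. ddelta_majorant R \<bar>lag_coord h u k\<bar>)"
  have D1: "delta \<theta> h u \<le> D1" if "\<theta> \<in> \<Theta>" for \<theta>
    unfolding D1_def using assms(2) that R_coord[OF that] by (intro delta_le_sum_square_lags) auto
  have Kd: "\<bar>ddelta h u i \<theta>\<bar> \<le> Kd \<and> \<bar>ddelta2 h u i j \<theta>\<bar> \<le> Kd" if "\<theta> \<in> \<Theta>" for \<theta> i j
  proof -
    have "ddelta_majorant R \<bar>lag_coord h u (snd i)\<bar> \<le> Kd" unfolding Kd_def
      by (rule member_le_sum) (auto intro: ddelta_majorant_nonneg R0)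
    then show ?thesis
      using ddelta_bounds(1)[where \<theta>=\<theta> and R=R and h=h and u=u and i=i]
        ddelta_bounds(2)[where \<theta>=\<theta> and R=R and h=h and u=u and i=i and j=j]
        assms(2) that R_coord[OF that] by auto
  qed
  show ?thesis
  proof (rule that[of D0 D1 Kd])
    show "D0 \<le> D1" using D0(2)[OF \<theta>0] D1[OF \<theta>0] by linarith
  qed (use D0 D1 Kd in auto)
qed

section \<open>Moment weights\<close>

lemma dyadic_bracket: assumes "1 \<le> (z::real)" shows "\<exists>k::nat. 2^k \<le> z \<and> z < 2^(k+1)"
proof -
  define l where "l = log 2 z"
  have l0: "0 \<le> l" using assms by (simp add: l_def)
  define k where "k = nat \<lfloor>l\<rfloor>"
  have kf: "real k = of_int \<lfloor>l\<rfloor>" using l0 by (simp add: k_def)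
  have zl: "z = 2 powr l" using assms by (simp add: l_def)
  have "(2::real)^k = 2 powr (real k)" by (simp add: powr_realpow)
  also have "\<dots> \<le> 2 powr l" using kf by (intro powr_mono) auto
  finally have a: "2^k \<le> z" using zl by simp
  have "2 powr l < 2 powr (real k + 1)" using kf by (intro powr_less_mono) linarith+
  also have "2 powr (real k + 1) = (2::real)^(k+1)" by (simp add: powr_add powr_realpow)
  finally show ?thesis using a zl by auto
qed

lemma ennreal_le_dyadic_sum:
  fixes z :: real
  shows "ennreal z \<le> 1 + (\<Sum>k. ennreal (2^(k+1)) * indicator {y. 2^k \<le> y} z)"
proof (cases "z \<le> 1")
  case True
  then have "ennreal z \<le> 1" by (simp add: ennreal_leI)
  then show ?thesis by (rule order_trans) (rule add_increasing2; simp)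
next
  case False
  then obtain k :: nat where k: "2^k \<le> z" "z < 2^(k+1)" using dyadic_bracket[of z] by auto
  define g where "g k = ennreal (2^(k+1)) * indicator {y. 2^k \<le> y} z" for k
  have "ennreal z \<le> g k" using k by (auto simp: g_def intro!: ennreal_leI)
  also have "\<dots> \<le> (\<Sum>k. g k)" using sum_le_suminf[of g "{k}"] by simp
  finally show ?thesis unfolding g_def by (rule order_trans) (rule add_increasing; simp)
qed

lemma suminf_geometric_ennreal_finite:
  "(\<Sum>k. ennreal (2^(k+1)) * ennreal (C * (1/4)^k)) < \<infinity>"
proof (cases "0 \<le> C")
  case True
  have "ennreal (2^(k+1)) * ennreal (C * (1/4)^k) = ennreal (2 * C * (1/2)^k)" for k
  proof -
    have "(2::real)^(k+1) * (C * (1/4)^k) = 2 * C * (1/2)^k"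
      by (simp add: power_divide field_simps flip: power_mult_distrib)
    then show ?thesis using True by (simp flip: ennreal_mult)
  qed
  moreover have "summable (\<lambda>k. 2 * C * (1/2::real)^k)" by (intro summable_mult summable_geometric) simp
  then have "(\<Sum>k. ennreal (2 * C * (1/2)^k)) \<noteq> \<top>"
    by (rule ennreal_suminf_neq_top) (use True in simp)
  ultimately show ?thesis by (simp add: less_top)
next
  case False
  then have "ennreal (C * (1/4)^k) = 0" for k by (intro ennreal_neg) (simp add: mult_nonpos_nonneg)
  then show ?thesis by simp
qed

lemma nn_integral_finite_if_dyadic_tail:
  assumes "prob_space M" and Z: "Z \<in> borel_measurable M"
    and tail: "\<And>k. measure M {\<omega> \<in> space M. 2^k \<le> Z \<omega>} \<le> C * (1/4)^k"
  shows "(\<integral>\<^sup>+\<omega>. ennreal (Z \<omega>) \<partial>M) < \<infinity>"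
proof -
  interpret prob_space M by fact
  define A where "A k = {\<omega> \<in> space M. 2^k \<le> Z \<omega>}" for k :: nat
  have A: "A k \<in> sets M" for k unfolding A_def using Z by measurable
  have "(\<integral>\<^sup>+\<omega>. ennreal (Z \<omega>) \<partial>M) \<le> (\<integral>\<^sup>+\<omega>. 1 + (\<Sum>k. ennreal (2^(k+1)) * indicator (A k) \<omega>) \<partial>M)"
    using ennreal_le_dyadic_sum by (intro nn_integral_mono) (simp add: A_def indicator_def)
  also have "\<dots> = 1 + (\<Sum>k. ennreal (2^(k+1)) * emeasure M (A k))"
    using A by (simp add: nn_integral_add nn_integral_suminf nn_integral_cmult_indicator emeasure_space_1)
  also have "\<dots> \<le> 1 + (\<Sum>k. ennreal (2^(k+1)) * ennreal (C * (1/4)^k))"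
    using tail by (intro add_left_mono suminf_le mult_left_mono)
      (auto simp: A_def emeasure_eq_measure intro!: ennreal_leI)
  also have "\<dots> < \<infinity>" using suminf_geometric_ennreal_finite by (simp add: less_top)
  finally show ?thesis .
qed

lemma power_le_exp: assumes "0 \<le> x" "1 \<le> n" shows "x^n \<le> real n ^ n * exp x"
proof -
  have n0: "0 < real n" using assms by simp
  have "x / n \<le> exp (x / n)" using exp_ge_add_one_self[of "x/n"] by linarith
  then have "(x / n)^n \<le> exp (x / n) ^ n" by (intro power_mono) (use assms n0 in auto)
  also have "exp (x / n) ^ n = exp x" using n0 by (simp add: exp_of_nat_mult[symmetric])
  finally have "(x / n)^n \<le> exp x" .
  then have "real n ^ n * (x / n)^n \<le> real n ^ n * exp x" by (intro mult_left_mono) auto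
  moreover have "real n ^ n * (x / n)^n = x^n" using n0 by (simp add: power_divide)
  ultimately show ?thesis by simp
qed

definition log_recip_weight :: "real \<Rightarrow> real" where "log_recip_weight y = 1 + \<bar>ln y\<bar> + 1 / y"
definition moment_weight :: "real \<Rightarrow> real \<Rightarrow> real" where "moment_weight c y = exp (c / y) + sqrt y"

lemma log_recip_weight_nonneg: "0 < y \<Longrightarrow> 0 \<le> log_recip_weight y"
  by (simp add: log_recip_weight_def)

lemma log_recip_weight_power_le_sqrt:
  assumes y: "1 \<le> y" and n: "1 \<le> n"
  shows "log_recip_weight y ^ n \<le> (2 + 2 * real n)^n * sqrt y"
proof -
  have n0: "0 < real n" using n by simp
  define w where "w = y powr (1 / (2 * real n))"
  have w1: "1 \<le> w" unfolding w_def using y n0 by (intro ge_one_powr_ge_zero) auto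
  have "ln y = (2 * real n) * ln w" unfolding w_def using y n0 by (simp add: ln_powr)
  also have "\<dots> \<le> (2 * real n) * w" using ln_le_minus_one[of w] w1 n0 by (intro mult_left_mono) auto
  finally have "ln y \<le> 2 * real n * w" .
  moreover have "1 / y \<le> 1" "\<bar>ln y\<bar> = ln y" using y by simp_all
  ultimately have "log_recip_weight y \<le> 2 + 2 * real n * w" unfolding log_recip_weight_def by linarith
  also have "\<dots> \<le> (2 + 2 * real n) * w" using w1 n0 by (simp add: algebra_simps)
  finally have "log_recip_weight y ^ n \<le> ((2 + 2 * real n) * w) ^ n"
    by (rule power_mono[OF _ log_recip_weight_nonneg]) (use y in simp)
  also have "\<dots> = (2 + 2 * real n)^n * w^n" by (simp add: power_mult_distrib)
  also have "w^n = y powr (real n * (1 / (2 * real n)))" unfolding w_def using y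
    by (simp add: powr_realpow[symmetric] powr_powr mult.commute)
  also have "\<dots> = sqrt y" using y n0 by (simp add: powr_half_sqrt)
  finally show ?thesis .
qed

lemma log_recip_weight_power_le_exp:
  assumes y: "0 < y" "y < 1" and c: "0 < c" and n: "1 \<le> n"
  shows "log_recip_weight y ^ n \<le> 3^n * (real n / c)^n * exp (c / y)"
proof -
  have "ln (1/y) \<le> 1/y - 1" using ln_le_minus_one[of "1/y"] y by simp
  then have "\<bar>ln y\<bar> \<le> 1 / y" using y by (simp add: ln_div)
  moreover have "1 \<le> 1 / y" using y by simp
  ultimately have "log_recip_weight y \<le> 3 * (1 / y)" unfolding log_recip_weight_def by linarith
  then have "log_recip_weight y ^ n \<le> (3 * (1/y))^n"
    by (rule power_mono[OF _ log_recip_weight_nonneg]) (use y in simp)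
  also have "\<dots> = 3^n * ((1/c)^n * (c / y)^n)" using c by (simp add: power_mult_distrib power_divide)
  also have "\<dots> \<le> 3^n * ((1/c)^n * (real n ^ n * exp (c / y)))"
    using power_le_exp[of "c/y" n] c y n by (intro mult_left_mono) auto
  also have "\<dots> = 3^n * (real n / c)^n * exp (c / y)" by (simp add: power_divide)
  finally show ?thesis .
qed

lemma log_recip_weight_power_le:
  assumes y: "0 < y" and c: "0 < c" and n: "1 \<le> n"
  shows "log_recip_weight y ^ n \<le> ((2 + 2 * real n)^n + 3^n * (real n / c)^n) * moment_weight c y"
proof (cases "1 \<le> y")
  case True
  then have "log_recip_weight y ^ n \<le> (2 + 2 * real n)^n * sqrt y"
    using n by (rule log_recip_weight_power_le_sqrt)
  also have "\<dots> \<le> ((2 + 2 * real n)^n + 3^n * (real n / c)^n) * moment_weight c y"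
    unfolding moment_weight_def using c True by (intro mult_mono) auto
  finally show ?thesis .
next
  case False
  then have "log_recip_weight y ^ n \<le> 3^n * (real n / c)^n * exp (c / y)"
    using y c n by (intro log_recip_weight_power_le_exp) auto
  also have "\<dots> \<le> ((2 + 2 * real n)^n + 3^n * (real n / c)^n) * moment_weight c y"
    unfolding moment_weight_def using c y by (intro mult_mono) auto
  finally show ?thesis .
qed

lemma power_add_le_2pow: "0 \<le> x \<Longrightarrow> 0 \<le> y \<Longrightarrow> (x + y)^n \<le> 2^n * (x^n + y^n)" for x y :: real
proof -
  assume xy: "0 \<le> x" "0 \<le> y"
  have "(x + y)^n \<le> (2 * max x y)^n" using xy by (intro power_mono) auto
  also have "\<dots> = 2^n * (max x y)^n" by (simp add: power_mult_distrib)
  also have "(max x y)^n \<le> x^n + y^n" using xy by (cases "x \<le> y") (auto simp: max_def)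
  finally show ?thesis by simp
qed

lemma poly_weight_power_le:
  assumes "0 < D0" "D0 \<le> D1" "0 < a" "0 < b" "0 < c"
  shows "poly_weight D0 D1 a b ^ 24 \<le> ((2 * weight_const D0 D1)^24 * 2^24 * ((2 + 2 * 24)^24 + 3^24 * (24 / c)^24))
      * (moment_weight c a + moment_weight c b)"
proof -
  define C where "C = ((2 + 2 * 24)^24 + 3^24 * (24 / c)^24 :: real)"
  have M0: "0 \<le> weight_const D0 D1" using poly_weight_ge_1[OF assms(1,2,3,4)] assms
    by (smt (verit, ccfv_SIG) weight_const_def divide_nonneg_nonneg real_sqrt_ge_zero zero_le_power)
  have T: "1 + \<bar>ln (b/a)\<bar> + 1/a + 1/b \<le> log_recip_weight a + log_recip_weight b"
  proof -
    have "ln (b/a) = ln b - ln a" using assms by (simp add: ln_div)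
    then have "\<bar>ln (b/a)\<bar> \<le> \<bar>ln a\<bar> + \<bar>ln b\<bar>" by simp
    then show ?thesis unfolding log_recip_weight_def by simp
  qed
  have T0: "0 \<le> 1 + \<bar>ln (b/a)\<bar> + 1/a + 1/b" using assms by simp
  have s1: "(log_recip_weight a + log_recip_weight b)^24 \<le> 2^24 * (C * moment_weight c a + C * moment_weight c b)"
  proof -
    have "(log_recip_weight a + log_recip_weight b)^24 \<le> 2^24 * (log_recip_weight a ^ 24 + log_recip_weight b ^ 24)"
      by (rule power_add_le_2pow) (use assms in \<open>auto simp: log_recip_weight_def\<close>)
    also have "log_recip_weight a ^ 24 + log_recip_weight b ^ 24 \<le> C * moment_weight c a + C * moment_weight c b"
      using log_recip_weight_power_le[OF assms(3,5), of 24] log_recip_weight_power_le[OF assms(4,5), of 24] by (simp add: C_def)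
    then have "2^24 * (log_recip_weight a ^ 24 + log_recip_weight b ^ 24) \<le> 2^24 * (C * moment_weight c a + C * moment_weight c b)" by simp
    finally show ?thesis .
  qed
  have "poly_weight D0 D1 a b ^ 24 = (2 * weight_const D0 D1)^24 * (1 + \<bar>ln (b/a)\<bar> + 1/a + 1/b)^24"
    by (simp add: poly_weight_def power_mult_distrib)
  also have "\<dots> \<le> (2 * weight_const D0 D1)^24 * (log_recip_weight a + log_recip_weight b)^24"
    by (intro mult_left_mono power_mono T T0) (use M0 in auto)
  also have "\<dots> \<le> (2 * weight_const D0 D1)^24 * (2^24 * (C * moment_weight c a + C * moment_weight c b))"
    by (intro mult_left_mono s1) (use M0 in auto)
  also have "\<dots> = ((2 * weight_const D0 D1)^24 * 2^24 * C) * (moment_weight c a + moment_weight c b)" by (simp add: algebra_simps)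
  finally show ?thesis by (simp only: C_def)
qed

section \<open>Domination of the score and the Hessian\<close>

lemma pderiv_ln_gdens_poly_bound:
  assumes D: "0 < D0" "D0 \<le> delta \<theta> h u" "delta \<theta> h u \<le> D1" and ab: "0 < a" "0 < b"
    and Kd: "\<bar>ddelta h u i \<theta>\<bar> \<le> Kd"
  shows "\<bar>pderiv_par i (\<lambda>\<phi>. ln (gdens \<phi> h u a b)) \<theta>\<bar> \<le> 5 / sqrt (2*D0) * Kd * poly_weight D0 D1 a b ^ 8"
proof -
  have "\<bar>pderiv_par i (\<lambda>\<phi>. ln (gdens \<phi> h u a b)) \<theta>\<bar>
      = \<bar>logdens_D_d1 (1/a) (1/b) b (ln (b/a)) (delta \<theta> h u)\<bar> * \<bar>ddelta h u i \<theta>\<bar>"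
    using D by (simp add: pderiv_ln_gdens[OF _ ab] abs_mult)
  also have "\<dots> \<le> 5 / sqrt (2*D0) * poly_weight D0 D1 a b ^ 8 * Kd"
    using D by (intro mult_mono logdens_D_bounds(1)[OF D ab] Kd) auto
  finally show ?thesis by (simp only: mult_ac)
qed

lemma pderiv2_ln_gdens_poly_bound:
  assumes D: "0 < D0" "D0 \<le> delta \<theta> h u" "delta \<theta> h u \<le> D1" and ab: "0 < a" "0 < b"
    and Kd: "\<bar>ddelta h u i \<theta>\<bar> \<le> Kd" "\<bar>ddelta h u j \<theta>\<bar> \<le> Kd" "\<bar>ddelta2 h u i j \<theta>\<bar> \<le> Kd"
  shows "\<bar>pderiv_par i (pderiv_par j (\<lambda>\<phi>. ln (gdens \<phi> h u a b))) \<theta>\<bar>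
    \<le> ((30 + 5 / sqrt (2*D0)) / (2*D0) * Kd^2 + 5 / sqrt (2*D0) * Kd) * poly_weight D0 D1 a b ^ 8"
proof -
  note lb = logdens_D_bounds[OF D ab]
  have Dp: "0 < delta \<theta> h u" using D by linarith
  have "\<bar>pderiv_par i (pderiv_par j (\<lambda>\<phi>. ln (gdens \<phi> h u a b))) \<theta>\<bar>
     \<le> \<bar>logdens_D_d2 (1/a) (1/b) b (ln (b/a)) (delta \<theta> h u)\<bar> * \<bar>ddelta h u i \<theta>\<bar> * \<bar>ddelta h u j \<theta>\<bar>
       + \<bar>logdens_D_d1 (1/a) (1/b) b (ln (b/a)) (delta \<theta> h u)\<bar> * \<bar>ddelta2 h u i j \<theta>\<bar>"
    unfolding pderiv2_ln_gdens[OF Dp ab] by (simp add: abs_mult[symmetric] abs_triangle_ineq)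
  also have "\<dots> \<le> ((30 + 5 / sqrt (2*D0)) / (2*D0) * poly_weight D0 D1 a b ^ 8) * Kd * Kd
      + (5 / sqrt (2*D0) * poly_weight D0 D1 a b ^ 8) * Kd"
    using D Kd by (intro add_mono mult_mono lb) auto
  finally show ?thesis by (simp add: algebra_simps power2_eq_square)
qed

lemma ln_gdens_derivs_poly_bound:
  fixes \<Theta> :: "'d::finite par set"
  assumes "compact \<Theta>" "\<Theta> \<subseteq> admissible" "\<Theta> \<noteq> {}" "(h, u) \<noteq> (0, 0)"
  obtains D0 D1 K where "0 < D0" "D0 \<le> D1"
    and "\<And>a b \<theta> i. 0 < a \<Longrightarrow> 0 < b \<Longrightarrow> \<theta> \<in> \<Theta> \<Longrightarrow>
      \<bar>pderiv_par i (\<lambda>\<phi>. ln (gdens \<phi> h u a b)) \<theta>\<bar> ^ 3 \<le> K * poly_weight D0 D1 a b ^ 24"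
    and "\<And>a b \<theta> i j. 0 < a \<Longrightarrow> 0 < b \<Longrightarrow> \<theta> \<in> \<Theta> \<Longrightarrow>
      \<bar>pderiv_par i (pderiv_par j (\<lambda>\<phi>. ln (gdens \<phi> h u a b))) \<theta>\<bar> \<le> K * poly_weight D0 D1 a b ^ 24"
proof -
  obtain D0 D1 Kd where D: "0 < D0" "D0 \<le> D1"
    and delta: "\<And>\<theta>. \<theta> \<in> \<Theta> \<Longrightarrow> D0 \<le> delta \<theta> h u \<and> delta \<theta> h u \<le> D1"
    and dd: "\<And>\<theta> i j. \<theta> \<in> \<Theta> \<Longrightarrow> \<bar>ddelta h u i \<theta>\<bar> \<le> Kd \<and> \<bar>ddelta2 h u i j \<theta>\<bar> \<le> Kd"
    using delta_uniform_bounds[OF assms] by blast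
  obtain \<theta>0 where "\<theta>0 \<in> \<Theta>" using assms(3) by auto
  from dd[OF this] have Kd: "0 \<le> Kd" by (meson abs_ge_zero order_trans)
  define c1 c2 where "c1 = 5 / sqrt (2*D0)" and "c2 = (30 + 5 / sqrt (2*D0)) / (2*D0)"
  have c: "0 \<le> c1" "0 \<le> c2" using D by (auto simp: c1_def c2_def)
  define K where "K = (c1 * Kd)^3 + c2 * Kd^2 + c1 * Kd"
  have X: "1 \<le> poly_weight D0 D1 a b" if "0 < a" "0 < b" for a b
    using D that by (intro poly_weight_ge_1)
  show ?thesis
  proof (rule that[OF D, of K])
    fix a b :: real and \<theta> i assume ab: "0 < a" "0 < b" and \<theta>: "\<theta> \<in> \<Theta>"
    define X where "X = poly_weight D0 D1 a b"
    have "\<bar>pderiv_par i (\<lambda>\<phi>. ln (gdens \<phi> h u a b)) \<theta>\<bar> ^ 3 \<le> (c1 * Kd * X^8) ^ 3"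
      using delta[OF \<theta>] dd[OF \<theta>] unfolding c1_def X_def
      by (intro power_mono pderiv_ln_gdens_poly_bound D(1) ab) auto
    also have "\<dots> = (c1 * Kd)^3 * X^24" by (simp add: power_mult_distrib flip: power_mult)
    also have "\<dots> \<le> K * X^24" using c Kd by (intro mult_right_mono) (auto simp: K_def)
    finally show "\<bar>pderiv_par i (\<lambda>\<phi>. ln (gdens \<phi> h u a b)) \<theta>\<bar> ^ 3 \<le> K * poly_weight D0 D1 a b ^ 24"
      by (simp add: X_def)
  next
    fix a b :: real and \<theta> i j assume ab: "0 < a" "0 < b" and \<theta>: "\<theta> \<in> \<Theta>"
    define X where "X = poly_weight D0 D1 a b"
    have "\<bar>pderiv_par i (pderiv_par j (\<lambda>\<phi>. ln (gdens \<phi> h u a b))) \<theta>\<bar> \<le> (c2 * Kd^2 + c1 * Kd) * X^8"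
      using delta[OF \<theta>] dd[OF \<theta>] unfolding c1_def c2_def X_def
      by (intro pderiv2_ln_gdens_poly_bound D(1) ab) auto
    also have "\<dots> \<le> K * X^24"
      using c Kd X[OF ab] by (intro mult_mono power_increasing) (auto simp: K_def X_def)
    finally show "\<bar>pderiv_par i (pderiv_par j (\<lambda>\<phi>. ln (gdens \<phi> h u a b))) \<theta>\<bar> \<le> K * poly_weight D0 D1 a b ^ 24"
      by (simp add: X_def)
  qed
qed

section \<open>Moments of a max-stable pair\<close>

lemma le_of_pow2_le_exp_recip:
  fixes c x :: real
  assumes c: "0 < c" and k: "0 < k" and le: "2^k \<le> (if 0 < x then exp (c / x) else 0)"
  shows "x \<le> c / (real k * ln 2)"
proof -
  have x: "0 < x"
  proof (rule ccontr)
    assume "\<not> 0 < x"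
    with le have "(2::real)^k \<le> 0" by simp
    moreover have "(0::real) < 2^k" by simp
    ultimately show False by linarith
  qed
  then have "2^k \<le> exp (c / x)" using le by simp
  then have "ln (2^k) \<le> ln (exp (c / x))" by (subst ln_le_cancel_iff) auto
  then have "real k * ln 2 \<le> c / x" by (simp add: ln_realpow)
  then show ?thesis using x k by (simp add: field_simps)
qed

lemma Vdelta_ge:
  assumes "0 < D" "0 < y" "y \<le> n"
  shows "Phi 0 / y \<le> Vdelta D y n"
proof -
  have "0 \<le> ln (n / y)" using assms by simp
  then have Varg_nonneg: "0 \<le> Varg D y n" unfolding Varg_def using assms by (intro add_nonneg_nonneg divide_nonneg_pos) auto
  have "Phi 0 / y \<le> 1 / y * Phi (Varg D y n)" using Phi_mono[OF Varg_nonneg] assms by (simp add: divide_right_mono)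
  moreover have "0 \<le> 1 / n * Phi (Varg D n y)" using assms by (simp add: Phi_nonneg)
  ultimately show ?thesis unfolding Vdelta_def by linarith
qed

lemma Vdelta_diag_le: "0 < y \<Longrightarrow> Vdelta D y y \<le> 2 / y"
proof -
  assume y: "0 < y"
  have "1 / y * Phi (Varg D y y) \<le> 1 / y" using Phi_le_1 y by (simp add: divide_right_mono)
  then show ?thesis unfolding Vdelta_def by simp
qed

locale maxstable_pair = prob_space M for M :: "'a measure" +
  fixes X Y :: "'a \<Rightarrow> real" and D :: real
  assumes X_meas: "X \<in> borel_measurable M" and Y_meas: "Y \<in> borel_measurable M"
    and D_pos: "0 < D"
    and joint_cdf: "\<And>y1 y2. 0 < y1 \<Longrightarrow> 0 < y2 \<Longrightarrow> measure M {\<omega> \<in> space M. X \<omega> \<le> y1 \<and> Y \<omega> \<le> y2} = exp (- Vdelta D y1 y2)"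
begin

lemmas [measurable] = X_meas Y_meas

lemma cdf_le_exp: assumes y: "0 < y" shows "measure M {\<omega> \<in> space M. X \<omega> \<le> y} \<le> exp (- Phi 0 / y)"
proof -
  define A where "A n = {\<omega> \<in> space M. X \<omega> \<le> y \<and> Y \<omega> \<le> real n}" for n :: nat
  have As: "range A \<subseteq> sets M" unfolding A_def using X_meas Y_meas by auto
  have inc: "incseq A" unfolding A_def incseq_def by auto
  have U: "(\<Union>n. A n) = {\<omega> \<in> space M. X \<omega> \<le> y}"
  proof
    show "(\<Union>n. A n) \<subseteq> {\<omega> \<in> space M. X \<omega> \<le> y}" unfolding A_def by auto
    show "{\<omega> \<in> space M. X \<omega> \<le> y} \<subseteq> (\<Union>n. A n)"
    proof
      fix \<omega> assume "\<omega> \<in> {\<omega> \<in> space M. X \<omega> \<le> y}"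
      moreover obtain n :: nat where "Y \<omega> \<le> real n" using real_arch_simple by blast
      ultimately show "\<omega> \<in> (\<Union>n. A n)" unfolding A_def by auto
    qed
  qed
  have lim: "(\<lambda>n. measure M (A n)) \<longlonglongrightarrow> measure M {\<omega> \<in> space M. X \<omega> \<le> y}"
    using finite_Lim_measure_incseq[OF As inc] unfolding U .
  obtain N :: nat where N: "y \<le> real N" using real_arch_simple by blast
  show ?thesis
  proof (rule LIMSEQ_le_const2[OF lim], intro exI allI impI)
    fix n assume "Suc N \<le> n"
    then have n: "y \<le> real n" "0 < real n" using N by auto
    have "measure M (A n) = exp (- Vdelta D y n)" unfolding A_def by (rule joint_cdf) (use y n in auto)
    also have "\<dots> \<le> exp (- Phi 0 / y)" using Vdelta_ge[OF D_pos y n(1)] by simp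
    finally show "measure M (A n) \<le> exp (- Phi 0 / y)" .
  qed
qed

lemma tail_le: assumes y: "0 < y" shows "measure M {\<omega> \<in> space M. y < X \<omega>} \<le> 2 / y"
proof -
  have s1: "{\<omega> \<in> space M. X \<omega> \<le> y} \<in> sets M" by measurable
  have "exp (- (2 / y)) \<le> exp (- Vdelta D y y)" using Vdelta_diag_le[OF y, of D] by simp
  also have "\<dots> = measure M {\<omega> \<in> space M. X \<omega> \<le> y \<and> Y \<omega> \<le> y}" by (rule joint_cdf[symmetric]) (use y in auto)
  also have "\<dots> \<le> measure M {\<omega> \<in> space M. X \<omega> \<le> y}" by (rule finite_measure_mono) (use s1 in auto)
  finally have a: "1 - 2 / y \<le> measure M {\<omega> \<in> space M. X \<omega> \<le> y}"
    using exp_ge_add_one_self[of "- (2/y)"] by linarith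
  have "{\<omega> \<in> space M. y < X \<omega>} = space M - {\<omega> \<in> space M. X \<omega> \<le> y}" by auto
  then have "measure M {\<omega> \<in> space M. y < X \<omega>} = 1 - measure M {\<omega> \<in> space M. X \<omega> \<le> y}"
    using prob_compl[OF s1] by simp
  then show ?thesis using a by simp
qed

lemma AE_pos: "AE \<omega> in M. 0 < X \<omega>"
proof -
  have c: "0 < Phi 0" by (rule Phi_pos)
  define S where "S = {\<omega> \<in> space M. X \<omega> \<le> 0}"
  have Ss: "S \<in> sets M" unfolding S_def by measurable
  have b: "measure M S \<le> y / Phi 0" if y: "0 < y" for y
  proof -
    have "measure M S \<le> measure M {\<omega> \<in> space M. X \<omega> \<le> y}"
      by (rule finite_measure_mono) (use X_meas y in \<open>auto simp: S_def\<close>)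
    also have "\<dots> \<le> exp (- Phi 0 / y)" by (rule cdf_le_exp[OF y])
    also have "\<dots> \<le> y / Phi 0"
    proof -
      have "Phi 0 / y \<le> exp (Phi 0 / y)" using exp_ge_add_one_self[of "Phi 0 / y"] by linarith
      then have "1 / exp (Phi 0 / y) \<le> 1 / (Phi 0 / y)" using c y by (intro divide_left_mono) auto
      then show ?thesis using c y by (simp add: exp_minus field_simps)
    qed
    finally show ?thesis .
  qed
  have "measure M S = 0"
  proof (rule ccontr)
    assume "measure M S \<noteq> 0"
    then have m: "0 < measure M S" using measure_nonneg[of M S] by linarith
    have "measure M S \<le> (measure M S * Phi 0 / 2) / Phi 0" using b[of "measure M S * Phi 0 / 2"] m c by simp
    then show False using m c by (simp add: field_simps)
  qed
  then have "S \<in> null_sets M" using Ss by (simp add: null_sets_def emeasure_eq_measure)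
  then have "AE \<omega> in M. \<omega> \<notin> S" using AE_iff_null_sets[OF Ss] by simp
  with AE_space show ?thesis by eventually_elim (auto simp: S_def)
qed

lemma nn_integral_exp_recip_finite: "(\<integral>\<^sup>+\<omega>. ennreal (if 0 < X \<omega> then exp (Phi 0 / 2 / X \<omega>) else 0) \<partial>M) < \<infinity>"
proof (rule nn_integral_finite_if_dyadic_tail[OF prob_space_axioms, where C=1])
  show "(\<lambda>\<omega>. if 0 < X \<omega> then exp (Phi 0 / 2 / X \<omega>) else 0) \<in> borel_measurable M"
    by measurable
  fix k :: nat
  define c where "c = Phi 0 / 2"
  have c: "0 < c" using Phi_pos[of 0] by (simp add: c_def)
  show "measure M {\<omega> \<in> space M. 2^k \<le> (if 0 < X \<omega> then exp (Phi 0 / 2 / X \<omega>) else 0)} \<le> 1 * (1/4)^k"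
  proof (cases "k = 0")
    case True then show ?thesis by simp
  next
    case False
    define y where "y = c / (real k * ln 2)"
    have kl: "0 < real k * ln 2" using False by simp
    have y: "0 < y" using c kl by (simp add: y_def)
    have sub: "{\<omega> \<in> space M. 2^k \<le> (if 0 < X \<omega> then exp (Phi 0 / 2 / X \<omega>) else 0)}
        \<subseteq> {\<omega> \<in> space M. X \<omega> \<le> y}"
      using le_of_pow2_le_exp_recip[OF c, of k] False unfolding y_def c_def by auto
    have "measure M {\<omega> \<in> space M. 2^k \<le> (if 0 < X \<omega> then exp (Phi 0 / 2 / X \<omega>) else 0)}
        \<le> measure M {\<omega> \<in> space M. X \<omega> \<le> y}"
      by (rule finite_measure_mono[OF sub]) measurable
    also have "\<dots> \<le> exp (- Phi 0 / y)" by (rule cdf_le_exp[OF y])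
    also have "- Phi 0 / y = real k * (- ln 4)"
    proof -
      have "ln (4::real) = 2 * ln 2" using ln_realpow[of 2 2] by simp
      then show ?thesis unfolding y_def c_def using kl Phi_pos[of 0] by (simp add: field_simps)
    qed
    also have "exp (real k * (- ln 4)) = (1/4::real)^k" by (simp add: exp_of_nat_mult exp_minus inverse_eq_divide power_one_over)
    finally show ?thesis by simp
  qed
qed

lemma nn_integral_sqrt_finite: "(\<integral>\<^sup>+\<omega>. ennreal (if 0 < X \<omega> then sqrt (X \<omega>) else 0) \<partial>M) < \<infinity>"
proof (rule nn_integral_finite_if_dyadic_tail[OF prob_space_axioms, where C=4])
  show "(\<lambda>\<omega>. if 0 < X \<omega> then sqrt (X \<omega>) else 0) \<in> borel_measurable M"
    by measurable
  fix k :: nat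
  define y where "y = (4::real)^k / 2"
  have y: "0 < y" by (simp add: y_def)
  have sub: "{\<omega> \<in> space M. 2^k \<le> (if 0 < X \<omega> then sqrt (X \<omega>) else 0)} \<subseteq> {\<omega> \<in> space M. y < X \<omega>}"
  proof safe
    fix \<omega> assume "\<omega> \<in> space M" and h: "2^k \<le> (if 0 < X \<omega> then sqrt (X \<omega>) else 0)"
    have pos: "(0::real) < 2^k" by simp
    have X0: "0 < X \<omega>"
    proof (rule ccontr)
      assume "\<not> 0 < X \<omega>"
      with h have "(2::real)^k \<le> 0" by simp
      with pos show False by linarith
    qed
    then have "2^k \<le> sqrt (X \<omega>)" using h by simp
    then have "(2^k)^2 \<le> (sqrt (X \<omega>))^2" by (intro power_mono) (use pos in auto)
    then have "(2^k)^2 \<le> X \<omega>" using X0 by simp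
    moreover have "((2::real)^k)^2 = 4^k"
    proof -
      have "((2::real)^k)^2 = (2^2)^k" by (simp only: power_mult[symmetric] mult.commute)
      then show ?thesis by simp
    qed
    ultimately have "4^k \<le> X \<omega>" by simp
    then show "y < X \<omega>" unfolding y_def using X0 by linarith
  qed
  have "measure M {\<omega> \<in> space M. 2^k \<le> (if 0 < X \<omega> then sqrt (X \<omega>) else 0)}
      \<le> measure M {\<omega> \<in> space M. y < X \<omega>}"
    by (rule finite_measure_mono[OF sub]) measurable
  also have "\<dots> \<le> 2 / y" by (rule tail_le[OF y])
  also have "2 / y = 4 * (1/4)^k" by (simp add: y_def power_divide)
  finally show "measure M {\<omega> \<in> space M. 2^k \<le> (if 0 < X \<omega> then sqrt (X \<omega>) else 0)} \<le> 4 * (1/4)^k" .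
qed

lemma maxstable_pair_swap: "maxstable_pair M Y X D"
proof
  fix y1 y2 :: real assume "0 < y1" "0 < y2"
  then show "measure M {\<omega> \<in> space M. Y \<omega> \<le> y1 \<and> X \<omega> \<le> y2} = exp (- Vdelta D y1 y2)"
    using joint_cdf[of y2 y1] by (simp add: conj_commute Vdelta_commute)
qed (use X_meas Y_meas D_pos in auto)

lemma nn_integral_moment_weight_finite:
  "(\<integral>\<^sup>+\<omega>. ennreal (if 0 < X \<omega> then moment_weight (Phi 0 / 2) (X \<omega>) else 0) \<partial>M) < \<infinity>"
proof -
  have "(\<integral>\<^sup>+\<omega>. ennreal (if 0 < X \<omega> then moment_weight (Phi 0 / 2) (X \<omega>) else 0) \<partial>M)
      = (\<integral>\<^sup>+\<omega>. ennreal (if 0 < X \<omega> then exp (Phi 0 / 2 / X \<omega>) else 0)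
          + ennreal (if 0 < X \<omega> then sqrt (X \<omega>) else 0) \<partial>M)"
    by (intro nn_integral_cong) (simp add: moment_weight_def ennreal_plus)
  also have "\<dots> = (\<integral>\<^sup>+\<omega>. ennreal (if 0 < X \<omega> then exp (Phi 0 / 2 / X \<omega>) else 0) \<partial>M)
      + (\<integral>\<^sup>+\<omega>. ennreal (if 0 < X \<omega> then sqrt (X \<omega>) else 0) \<partial>M)"
    by (intro nn_integral_add) measurable
  also have "\<dots> < \<infinity>"
    using nn_integral_exp_recip_finite nn_integral_sqrt_finite by (simp add: ennreal_add_eq_top less_top)
  finally show ?thesis .
qed

lemma nn_integral_finite_if_le_moment_weights:
  assumes "AE \<omega> in M. 0 < X \<omega> \<longrightarrow> 0 < Y \<omega> \<longrightarrow>
      f \<omega> \<le> ennreal (K * (moment_weight (Phi 0 / 2) (X \<omega>) + moment_weight (Phi 0 / 2) (Y \<omega>)))"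
  shows "(\<integral>\<^sup>+\<omega>. f \<omega> \<partial>M) < \<infinity>"
proof -
  interpret swap: maxstable_pair M Y X D by (rule maxstable_pair_swap)
  define w where "w Z \<omega> = ennreal (if 0 < Z \<omega> then moment_weight (Phi 0 / 2) (Z \<omega>) else 0)"
    for Z :: "'a \<Rightarrow> real" and \<omega>
  have w_nonneg: "0 \<le> moment_weight (Phi 0 / 2) y" if "0 < y" for y
    using that by (simp add: moment_weight_def add_nonneg_nonneg)
  have "(\<integral>\<^sup>+\<omega>. f \<omega> \<partial>M) \<le> (\<integral>\<^sup>+\<omega>. ennreal (max K 0) * (w X \<omega> + w Y \<omega>) \<partial>M)"
  proof (rule nn_integral_mono_AE)
    show "AE \<omega> in M. f \<omega> \<le> ennreal (max K 0) * (w X \<omega> + w Y \<omega>)"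
      using assms AE_pos swap.AE_pos
    proof eventually_elim
      case (elim \<omega>)
      define S where "S = moment_weight (Phi 0 / 2) (X \<omega>) + moment_weight (Phi 0 / 2) (Y \<omega>)"
      have pos: "0 < X \<omega>" "0 < Y \<omega>" using elim by simp_all
      have S: "0 \<le> S" unfolding S_def using w_nonneg pos by (simp add: add_nonneg_nonneg)
      have "f \<omega> \<le> ennreal (K * S)" using elim pos by (simp add: S_def)
      also have "\<dots> \<le> ennreal (max K 0 * S)" by (intro ennreal_leI mult_right_mono S) simp
      also have "\<dots> = ennreal (max K 0) * (w X \<omega> + w Y \<omega>)"
        using pos w_nonneg by (simp add: S_def w_def ennreal_mult ennreal_plus)
      finally show ?case .
    qed
  qed
  also have "\<dots> = ennreal (max K 0) * ((\<integral>\<^sup>+\<omega>. w X \<omega> \<partial>M) + (\<integral>\<^sup>+\<omega>. w Y \<omega> \<partial>M))"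
  proof -
    have meas: "w Z \<in> borel_measurable M" if "Z \<in> borel_measurable M" for Z
      unfolding w_def moment_weight_def using that by measurable
    show ?thesis
      using meas[OF X_meas] meas[OF Y_meas] by (simp add: nn_integral_cmult nn_integral_add)
  qed
  also have "\<dots> < \<infinity>"
    using nn_integral_moment_weight_finite swap.nn_integral_moment_weight_finite
    by (simp add: w_def ennreal_mult_less_top ennreal_add_eq_top less_top)
  finally show ?thesis .
qed

end

lemma ln_gdens_derivs_le_moment_weight:
  fixes \<Theta> :: "'d::finite par set"
  assumes "compact \<Theta>" "\<Theta> \<subseteq> admissible" "\<Theta> \<noteq> {}" "(h, u) \<noteq> (0, 0)" "0 < c"
  obtains K where
    "\<And>a b \<theta> i. 0 < a \<Longrightarrow> 0 < b \<Longrightarrow> \<theta> \<in> \<Theta> \<Longrightarrow>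
       \<bar>pderiv_par i (\<lambda>\<phi>. ln (gdens \<phi> h u a b)) \<theta>\<bar> ^ 3 \<le> K * (moment_weight c a + moment_weight c b)"
    "\<And>a b \<theta> i j. 0 < a \<Longrightarrow> 0 < b \<Longrightarrow> \<theta> \<in> \<Theta> \<Longrightarrow>
       \<bar>pderiv_par i (pderiv_par j (\<lambda>\<phi>. ln (gdens \<phi> h u a b))) \<theta>\<bar> \<le> K * (moment_weight c a + moment_weight c b)"
proof -
  obtain D0 D1 K where D: "0 < D0" "D0 \<le> D1"
    and K: "\<And>a b \<theta> i. 0 < a \<Longrightarrow> 0 < b \<Longrightarrow> \<theta> \<in> \<Theta> \<Longrightarrow>
        \<bar>pderiv_par i (\<lambda>\<phi>. ln (gdens \<phi> h u a b)) \<theta>\<bar> ^ 3 \<le> K * poly_weight D0 D1 a b ^ 24"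
      "\<And>a b \<theta> i j. 0 < a \<Longrightarrow> 0 < b \<Longrightarrow> \<theta> \<in> \<Theta> \<Longrightarrow>
        \<bar>pderiv_par i (pderiv_par j (\<lambda>\<phi>. ln (gdens \<phi> h u a b))) \<theta>\<bar> \<le> K * poly_weight D0 D1 a b ^ 24"
    using ln_gdens_derivs_poly_bound[OF assms(1-4)] by blast
  define C where "C = (2 * weight_const D0 D1)^24 * 2^24 * ((2 + 2 * 24)^24 + 3^24 * (24 / c)^24)"
  have weight: "K * poly_weight D0 D1 a b ^ 24 \<le> (max K 0 * C) * (moment_weight c a + moment_weight c b)"
    if "0 < a" "0 < b" for a b
  proof -
    have "K * poly_weight D0 D1 a b ^ 24 \<le> max K 0 * poly_weight D0 D1 a b ^ 24"
      by (intro mult_right_mono) auto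
    also have "\<dots> \<le> max K 0 * (C * (moment_weight c a + moment_weight c b))"
      unfolding C_def by (intro mult_left_mono poly_weight_power_le D that assms(5)) auto
    finally show ?thesis by (simp only: mult.assoc)
  qed
  show ?thesis
  proof (rule that)
    fix a b :: real and \<theta> i assume ab: "0 < a" "0 < b" and \<theta>: "\<theta> \<in> \<Theta>"
    from K(1)[OF ab \<theta>] show "\<bar>pderiv_par i (\<lambda>\<phi>. ln (gdens \<phi> h u a b)) \<theta>\<bar> ^ 3
        \<le> max K 0 * C * (moment_weight c a + moment_weight c b)"
      using weight[OF ab] by (rule order_trans)
  next
    fix a b :: real and \<theta> i j assume ab: "0 < a" "0 < b" and \<theta>: "\<theta> \<in> \<Theta>"
    from K(2)[OF ab \<theta>] show "\<bar>pderiv_par i (pderiv_par j (\<lambda>\<phi>. ln (gdens \<phi> h u a b))) \<theta>\<bar>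
        \<le> max K 0 * C * (moment_weight c a + moment_weight c b)"
      using weight[OF ab] by (rule order_trans)
  qed
qed

lemma (in maxstable_pair) nn_integral_ln_gdens_derivs_finite:
  fixes \<Theta> :: "'d::finite par set"
  assumes "compact \<Theta>" "\<Theta> \<subseteq> admissible" "\<Theta> \<noteq> {}" "(h, u) \<noteq> (0, 0)"
  shows "\<theta> \<in> \<Theta> \<Longrightarrow>
      (\<integral>\<^sup>+\<omega>. ennreal (\<bar>pderiv_par i (\<lambda>\<phi>. ln (gdens \<phi> h u (X \<omega>) (Y \<omega>))) \<theta>\<bar> ^ 3) \<partial>M) < \<infinity>"
    and "(\<integral>\<^sup>+\<omega>. (SUP \<theta>\<in>\<Theta>. ennreal \<bar>pderiv_par i (pderiv_par j
      (\<lambda>\<phi>. ln (gdens \<phi> h u (X \<omega>) (Y \<omega>)))) \<theta>\<bar>) \<partial>M) < \<infinity>"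
proof -
  have "0 < Phi 0 / 2" using Phi_pos[of 0] by simp
  then obtain K where K:
    "\<And>a b \<theta> i. 0 < a \<Longrightarrow> 0 < b \<Longrightarrow> \<theta> \<in> \<Theta> \<Longrightarrow>
       \<bar>pderiv_par i (\<lambda>\<phi>. ln (gdens \<phi> h u a b)) \<theta>\<bar> ^ 3
         \<le> K * (moment_weight (Phi 0 / 2) a + moment_weight (Phi 0 / 2) b)"
    "\<And>a b \<theta> i j. 0 < a \<Longrightarrow> 0 < b \<Longrightarrow> \<theta> \<in> \<Theta> \<Longrightarrow>
       \<bar>pderiv_par i (pderiv_par j (\<lambda>\<phi>. ln (gdens \<phi> h u a b))) \<theta>\<bar>
         \<le> K * (moment_weight (Phi 0 / 2) a + moment_weight (Phi 0 / 2) b)"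
    using ln_gdens_derivs_le_moment_weight[OF assms] by blast
  show "(\<integral>\<^sup>+\<omega>. ennreal (\<bar>pderiv_par i (\<lambda>\<phi>. ln (gdens \<phi> h u (X \<omega>) (Y \<omega>))) \<theta>\<bar> ^ 3) \<partial>M) < \<infinity>"
    if "\<theta> \<in> \<Theta>"
    using that by (intro nn_integral_finite_if_le_moment_weights[of _ K] AE_I2 impI ennreal_leI K)
  show "(\<integral>\<^sup>+\<omega>. (SUP \<theta>\<in>\<Theta>. ennreal \<bar>pderiv_par i (pderiv_par j
      (\<lambda>\<phi>. ln (gdens \<phi> h u (X \<omega>) (Y \<omega>)))) \<theta>\<bar>) \<partial>M) < \<infinity>"
    by (intro nn_integral_finite_if_le_moment_weights[of _ K] AE_I2 impI SUP_least ennreal_leI K)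
qed

theorem lemma2:
  fixes M :: "'a measure"
    and eta :: "(real ^ 'd::finite) \<times> real \<Rightarrow> 'a \<Rightarrow> real"
    and \<Theta>star :: "'d par set"
    and \<theta>star :: "'d par"
    and r :: "nat ^ 'd" and p :: nat
    and s1 s2 :: "real ^ 'd" and t1 t2 :: real
  assumes "prob_space M"
    and meas: "\<And>s t. 0 \<le> t \<Longrightarrow> eta (s, t) \<in> borel_measurable M"
    and law: "\<And>s t s' t' y1 y2. 0 \<le> t \<Longrightarrow> 0 \<le> t' \<Longrightarrow> (s, t) \<noteq> (s', t') \<Longrightarrow>
        0 < y1 \<Longrightarrow> 0 < y2 \<Longrightarrow>
        measure M {\<omega> \<in> space M. eta (s, t) \<omega> \<le> y1 \<and> eta (s', t') \<omega> \<le> y2}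
          = Gcdf \<theta>star (s' - s) (t' - t) y1 y2"
    and "compact \<Theta>star" and "\<Theta>star \<subseteq> admissible" and "\<theta>star \<in> \<Theta>star"
    and "(r, p) \<noteq> (0, 0)"
    and "identifiable \<Theta>star r p"
    and "0 \<le> t1" and "0 \<le> t2" and "(s1, t1) \<noteq> (s2, t2)"
  shows "(\<forall>\<theta>\<in>\<Theta>star. \<forall>i.
           (\<integral>\<^sup>+ \<omega>. ennreal (\<bar>pderiv_par i
               (\<lambda>\<phi>. ln (gdens \<phi> (s2 - s1) (t2 - t1) (eta (s1, t1) \<omega>) (eta (s2, t2) \<omega>))) \<theta>\<bar> ^ 3) \<partial>M)
           < \<infinity>) \<and>
         (\<forall>i j.
           (\<integral>\<^sup>+ \<omega>. (SUP \<theta>\<in>\<Theta>star. ennreal \<bar>pderiv_par i (pderiv_par j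
               (\<lambda>\<phi>. ln (gdens \<phi> (s2 - s1) (t2 - t1) (eta (s1, t1) \<omega>) (eta (s2, t2) \<omega>)))) \<theta>\<bar>) \<partial>M)
           < \<infinity>)"
proof -
  have lag: "(s2 - s1, t2 - t1) \<noteq> (0, 0)" using \<open>(s1, t1) \<noteq> (s2, t2)\<close> by auto
  interpret maxstable_pair M "eta (s1, t1)" "eta (s2, t2)" "delta \<theta>star (s2 - s1) (t2 - t1)"
  proof (rule maxstable_pair.intro[OF assms(1) maxstable_pair_axioms.intro])
    show "eta (s1, t1) \<in> borel_measurable M" "eta (s2, t2) \<in> borel_measurable M"
      using meas assms(9,10) by auto
    show "0 < delta \<theta>star (s2 - s1) (t2 - t1)" using assms(5,6) lag by (intro delta_pos) auto
    fix y1 y2 :: real assume "0 < y1" "0 < y2"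
    then show "measure M {\<omega> \<in> space M. eta (s1, t1) \<omega> \<le> y1 \<and> eta (s2, t2) \<omega> \<le> y2}
        = exp (- Vdelta (delta \<theta>star (s2 - s1) (t2 - t1)) y1 y2)"
      using law[OF assms(9-11)] by (simp add: Gcdf_eq_exp_Vdelta)
  qed
  have "\<Theta>star \<noteq> {}" using assms(6) by auto
  note finite = nn_integral_ln_gdens_derivs_finite[OF assms(4,5) this lag]
  show ?thesis using finite(1) finite(2) by blast
qed

end
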